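(* Let $(G,N,\theta)_{\mathcal{H}}$ be a modular $\mathcal{H}$-triple, $E=\mathbb{F}_p[\theta]$, $\bar G=G/N$ acting on $E$ by $z^{gN}=z^{\sigma_g}$. Choose a representation $X$ affording $\theta$ realized over $E$, let $A$ be the associated $G$-algebra, choose a unitary embedding $\iota:A\to\mathrm{M}_{ms}(\mathbb{F}_p)$ and a function $Y:G\to\mathrm{GL}_{ms}(\mathbb{F}_p)$ with the properties below, and let $\bar\alpha\in\mathbf{Z}^2(\bar G,E^\times)$ be defined by $Y(g)Y(h)=Y(gh)\iota(\bar\alpha(gN,hN)1_A)$. Then the cohomology class $[\bar\alpha]\in\mathbf{H}^2(\bar G,E^\times)$ does not depend on the choices of $X$, $\iota$ and $Y$; it is determined by the $\mathcal{H}$-triple.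
   Context: $p$ prime; $F$ a sufficiently large finite field of characteristic $p$ (residue field of a $p$-modular system), $\mathcal{H}$ a group of automorphisms acting on $F$ and inducing all automorphisms of $F$. Modular $\mathcal{H}$-triple: $N\trianglelefteq G$ finite, $\theta\in\mathrm{IBr}(N)$ with $G$-stable $\mathcal{H}$-orbit. $E=\mathbb{F}_p[\theta]$: subfield of $F$ generated by reductions of values of $\theta$; $m=\theta(1)$, $s=[E:\mathbb{F}_p]$. For $g\in G$, $\sigma_g\in\mathrm{Gal}(E/\mathbb{F}_p)$ is the unique element such that $n\mapsto X(gng^{-1})^{\sigma_g}$ affords $\theta$ (it is independent of $X$, being the restriction of any $\tau\in\mathcal{H}$ with $\theta^\tau=\theta^{g^{-1}}$). Associated $G$-algebra: $A=\mathrm{M}_m(E)$ with $x^g=T_g^{-1}x^{\sigma_g}T_g$ where $X(gng^{-1})^{\sigma_g}=T_gX(n)T_g^{-1}$ for all $n$. Properties of $Y$: $Y(g)^{-1}\iota(x)Y(g)=\iota(x^g)$; $Y(n)=\iota(X(n))$ for $n\in N$; $Y(gn)=Y(g)Y(n)$, $Y(ng)=Y(n)Y(g)$. Then $Y(gh)^{-1}Y(g)Y(h)\in\iota(E^\times 1_A)$ and the resulting $\alpha(g,h)\in E^\times$ depends only on the cosets $gN,hN$, giving $\bar\alpha$. Factor sets $\beta\in\mathbf{Z}^2(\bar G,E^\times)$ satisfy $\beta(xy,z)\beta(x,y)^z=\beta(x,yz)\beta(y,z)$; $\beta,\beta'$ are cohomologous if $\beta'(x,y)=\beta(x,y)\gamma(x)^y\gamma(y)\gamma(xy)^{-1}$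 for some $\gamma:\bar G\to E^\times$; $\mathbf{H}^2$ is the group of classes. *)

theory Defs
  imports "HOL-Algebra.Coset" "Jordan_Normal_Form.Matrix"
begin

definition prime_subfield :: "'f::field set" where
  "prime_subfield = range of_nat"

definition subfield :: "'f::field set \<Rightarrow> bool" where
  "subfield K \<longleftrightarrow> 0 \<in> K \<and> 1 \<in> K \<and>
     (\<forall>x\<in>K. \<forall>y\<in>K. x + y \<in> K \<and> x * y \<in> K) \<and>
     (\<forall>x\<in>K. - x \<in> K \<and> inverse x \<in> K)"

definition generated_subfield :: "'f::field set \<Rightarrow> 'f set" where
  "generated_subfield S = \<Inter>{K. subfield K \<and> S \<subseteq> K}"

definition mat_trace :: "'f::field mat \<Rightarrow> 'f" where
  "mat_trace M = (\<Sum>i<dim_row M. M $$ (i, i))"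

definition mats_over :: "'f set \<Rightarrow> nat \<Rightarrow> nat \<Rightarrow> 'f::field mat set" where
  "mats_over K r c = {M \<in> carrier_mat r c. \<forall>i<r. \<forall>j<c. M $$ (i, j) \<in> K}"

definition field_aut :: "'f::field set \<Rightarrow> ('f \<Rightarrow> 'f) \<Rightarrow> bool" where
  "field_aut E \<sigma> \<longleftrightarrow> bij_betw \<sigma> E E \<and>
     (\<forall>x\<in>E. \<forall>y\<in>E. \<sigma> (x + y) = \<sigma> x + \<sigma> y \<and> \<sigma> (x * y) = \<sigma> x * \<sigma> y)"

definition mat_rep :: "('g, 'b) monoid_scheme \<Rightarrow> nat \<Rightarrow> ('g \<Rightarrow> 'f::field mat) \<Rightarrow> bool" where
  "mat_rep H d X \<longleftrightarrow> (\<forall>h\<in>carrier H. X h \<in> carrier_mat d d) \<and> X \<one>\<^bsub>H\<^esub> = 1\<^sub>m d \<and>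
     (\<forall>a\<in>carrier H. \<forall>b\<in>carrier H. X (a \<otimes>\<^bsub>H\<^esub> b) = X a * X b)"

definition rep_equiv :: "('g, 'b) monoid_scheme \<Rightarrow> nat \<Rightarrow> ('g \<Rightarrow> 'f::field mat) \<Rightarrow> ('g \<Rightarrow> 'f mat) \<Rightarrow> bool" where
  "rep_equiv H d X X' \<longleftrightarrow> (\<exists>P Pi. P \<in> carrier_mat d d \<and> Pi \<in> carrier_mat d d \<and>
     P * Pi = 1\<^sub>m d \<and> Pi * P = 1\<^sub>m d \<and> (\<forall>h\<in>carrier H. X' h = P * X h * Pi))"

definition invariant_subspace :: "('g, 'b) monoid_scheme \<Rightarrow> nat \<Rightarrow> ('g \<Rightarrow> 'f::field mat) \<Rightarrow> 'f vec set \<Rightarrow> bool" where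
  "invariant_subspace H d X W \<longleftrightarrow> W \<subseteq> carrier_vec d \<and> 0\<^sub>v d \<in> W \<and>
     (\<forall>v\<in>W. \<forall>w\<in>W. v + w \<in> W) \<and> (\<forall>c. \<forall>w\<in>W. c \<cdot>\<^sub>v w \<in> W) \<and>
     (\<forall>h\<in>carrier H. \<forall>w\<in>W. X h *\<^sub>v w \<in> W)"

definition irreducible_rep :: "('g, 'b) monoid_scheme \<Rightarrow> nat \<Rightarrow> ('g \<Rightarrow> 'f::field mat) \<Rightarrow> bool" where
  "irreducible_rep H d X \<longleftrightarrow> mat_rep H d X \<and> 0 < d \<and>
     (\<forall>W. invariant_subspace H d X W \<longrightarrow> W = {0\<^sub>v d} \<or> W = carrier_vec d)"

text \<open>F is "sufficiently large": a splitting field for all subgroups of G, i.e. every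
  F-irreducible representation of a subgroup is absolutely irreducible (its commutant is F).\<close>
definition splitting_field :: "'f::field itself \<Rightarrow> ('g, 'b) monoid_scheme \<Rightarrow> bool" where
  "splitting_field T G \<longleftrightarrow> (\<forall>H d (R :: 'g \<Rightarrow> 'f mat). subgroup H G \<longrightarrow>
      irreducible_rep (G\<lparr>carrier := H\<rparr>) d R \<longrightarrow>
      (\<forall>C\<in>carrier_mat d d. (\<forall>h\<in>H. C * R h = R h * C) \<longrightarrow> (\<exists>c. C = c \<cdot>\<^sub>m 1\<^sub>m d)))"

text \<open>Unitary (unital) embedding of the F_p-algebra A = M_m(E) into M_{ms}(F_p).\<close>
definition unital_embedding :: "'f::field set \<Rightarrow> nat \<Rightarrow> nat \<Rightarrow> ('f mat \<Rightarrow> 'f mat) \<Rightarrow> bool" where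
  "unital_embedding E m s \<iota> \<longleftrightarrow> inj_on \<iota> (mats_over E m m) \<and>
     \<iota> ` mats_over E m m \<subseteq> mats_over prime_subfield (m * s) (m * s) \<and>
     \<iota> (1\<^sub>m m) = 1\<^sub>m (m * s) \<and>
     (\<forall>x\<in>mats_over E m m. \<forall>y\<in>mats_over E m m. \<iota> (x + y) = \<iota> x + \<iota> y \<and> \<iota> (x * y) = \<iota> x * \<iota> y) \<and>
     (\<forall>c\<in>prime_subfield. \<forall>x\<in>mats_over E m m. \<iota> (c \<cdot>\<^sub>m x) = c \<cdot>\<^sub>m \<iota> x)"

text \<open>The G-algebra action on A is
  x^g = T_g^{-1} x^{\<sigma>_g} T_g where X(g n g^{-1})^{\<sigma>_g} = T_g X(n) T_g^{-1};
  Y(g)^{-1} \<iota>(x) Y(g) = \<iota>(x^g) is written as \<iota>(x) Y(g) = Y(g) \<iota>(x^g).\<close>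
definition Y_function :: "('g, 'b) monoid_scheme \<Rightarrow> 'g set \<Rightarrow> 'f::field set \<Rightarrow> nat \<Rightarrow> nat \<Rightarrow>
    ('g \<Rightarrow> 'f \<Rightarrow> 'f) \<Rightarrow> ('g \<Rightarrow> 'f mat) \<Rightarrow> ('f mat \<Rightarrow> 'f mat) \<Rightarrow> ('g \<Rightarrow> 'f mat) \<Rightarrow> bool" where
  "Y_function G N E m s sig X \<iota> Y \<longleftrightarrow>
     (\<forall>g\<in>carrier G. Y g \<in> mats_over prime_subfield (m * s) (m * s) \<and> invertible_mat (Y g)) \<and>
     (\<forall>g\<in>carrier G. \<exists>T Ti. T \<in> mats_over E m m \<and> Ti \<in> mats_over E m m \<and>
         T * Ti = 1\<^sub>m m \<and> Ti * T = 1\<^sub>m m \<and>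
         (\<forall>n\<in>N. map_mat (sig g) (X (g \<otimes>\<^bsub>G\<^esub> n \<otimes>\<^bsub>G\<^esub> inv\<^bsub>G\<^esub> g)) * T = T * X n) \<and>
         (\<forall>x\<in>mats_over E m m. \<iota> x * Y g = Y g * \<iota> (Ti * map_mat (sig g) x * T))) \<and>
     (\<forall>n\<in>N. Y n = \<iota> (X n)) \<and>
     (\<forall>g\<in>carrier G. \<forall>n\<in>N. Y (g \<otimes>\<^bsub>G\<^esub> n) = Y g * Y n \<and> Y (n \<otimes>\<^bsub>G\<^esub> g) = Y n * Y g)"

end

theory Submission
  imports Defs "HOL-Computational_Algebra.Polynomial" "HOL-Computational_Algebra.Primes"
begin

text \<open>Compare two choices \<open>(X, \<iota>, Y)\<close> and \<open>(X', \<iota>', Y')\<close>. The representations \<open>X\<close>, \<open>X'\<close> are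
  similar over \<open>F\<close>; applying a trace map \<open>F \<rightarrow> E\<close> to the intertwiners and using Schur's lemma shows
  they are similar over \<open>E\<close>, say by \<open>Q\<close>. Through \<open>\<iota>\<close> and \<open>\<iota>' \<circ> Ad Q\<close> the space \<open>\<bbbF>\<^sub>p\<^sup>m\<^sup>s\<close> becomes
  an \<open>M\<^sub>m(E)\<close>-module isomorphic to \<open>E\<^sup>m\<close> in two ways, so the two embeddings are conjugate by some
  \<open>U \<in> GL\<^sub>m\<^sub>s(\<bbbF>\<^sub>p)\<close> (Skolem--Noether). Conjugating \<open>Y'\<close> by \<open>U\<close> gives a lift for \<open>(X, \<iota>)\<close> with
  the same factor set \<open>\<alpha>'\<close>. Finally \<open>Y(g)\<^sup>-\<^sup>1 U\<^sup>-\<^sup>1 Y'(g) U\<close> commutes with \<open>\<iota>(E)\<close> and \<open>\<iota>(X(N))\<close>, so by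
  absolute irreducibility it is a scalar \<open>\<iota>(\<gamma>(g))\<close>; expanding both factor set equations then
  gives \<open>\<alpha>' = \<alpha> \<cdot> \<delta>\<gamma>\<close>, where the twist \<open>\<sigma>\<^sub>h\<close> appears when \<open>\<iota>(\<gamma>(g))\<close> is moved past \<open>Y(h)\<close>.\<close>

section \<open>Subfields and finite fields\<close>

lemma subfieldD:
  assumes "subfield K"
  shows "0 \<in> K" "1 \<in> K" "\<And>x y. x \<in> K \<Longrightarrow> y \<in> K \<Longrightarrow> x + y \<in> K"
    "\<And>x y. x \<in> K \<Longrightarrow> y \<in> K \<Longrightarrow> x * y \<in> K"
    "\<And>x. x \<in> K \<Longrightarrow> - x \<in> K" "\<And>x. x \<in> K \<Longrightarrow> inverse x \<in> K"
  using assms unfolding subfield_def by auto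

lemma subfield_diff: "subfield K \<Longrightarrow> x \<in> K \<Longrightarrow> y \<in> K \<Longrightarrow> x - y \<in> K"
  using subfieldD[of K] by (metis diff_conv_add_uminus)

lemma subfield_divide: "subfield K \<Longrightarrow> x \<in> K \<Longrightarrow> y \<in> K \<Longrightarrow> x / y \<in> K"
  using subfieldD[of K] by (metis divide_inverse)

lemma subfield_of_nat: "subfield K \<Longrightarrow> of_nat n \<in> K"
  by (induction n) (auto simp: subfieldD)

lemma prime_subfield_subset: "subfield K \<Longrightarrow> prime_subfield \<subseteq> K"
  unfolding prime_subfield_def using subfield_of_nat by blast

lemma subfield_generated_subfield: "subfield (generated_subfield S)"
  unfolding generated_subfield_def subfield_def by auto

lemma subfield_UNIV: "subfield UNIV"
  unfolding subfield_def by auto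

lemma prime_subfield_add: "(x::'f::field) \<in> prime_subfield \<Longrightarrow> y \<in> prime_subfield \<Longrightarrow> x + y \<in> prime_subfield"
  unfolding prime_subfield_def by (auto, metis of_nat_add rangeI)

lemma prime_subfield_mult: "(x::'f::field) \<in> prime_subfield \<Longrightarrow> y \<in> prime_subfield \<Longrightarrow> x * y \<in> prime_subfield"
  unfolding prime_subfield_def by (auto, metis of_nat_mult rangeI)

lemma prime_subfield_0: "0 \<in> prime_subfield" and prime_subfield_1: "1 \<in> prime_subfield"
  unfolding prime_subfield_def by (metis of_nat_0 rangeI, metis of_nat_1 rangeI)

lemma CHAR_eq_prime:
  assumes "prime p" "of_nat p = (0::'f::field)"
  shows "CHAR('f) = p"
proof -
  have "CHAR('f) dvd p" using assms of_nat_eq_0_iff_char_dvd by blast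
  moreover have "CHAR('f) \<noteq> 1" by simp
  ultimately show ?thesis using assms(1) by (meson prime_nat_iff)
qed

lemma card_prime_subfield:
  assumes "prime p" "of_nat p = (0::'f::field)"
  shows "card (prime_subfield :: 'f set) = p"
proof -
  have C: "CHAR('f) = p" using CHAR_eq_prime[OF assms] .
  have "prime_subfield = (of_nat ` {..<p} :: 'f set)"
  proof
    show "prime_subfield \<subseteq> (of_nat ` {..<p} :: 'f set)"
    proof
      fix x :: 'f assume "x \<in> prime_subfield"
      then obtain k where k: "x = of_nat k" unfolding prime_subfield_def by auto
      have "k = p * (k div p) + k mod p" by simp
      hence "(of_nat k :: 'f) = of_nat p * of_nat (k div p) + of_nat (k mod p)"
        by (metis of_nat_add of_nat_mult)
      hence "x = of_nat (k mod p)" using k assms by simp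
      moreover have "k mod p < p" using assms(1) prime_gt_0_nat by auto
      ultimately show "x \<in> of_nat ` {..<p}" by auto
    qed
  qed (auto simp: prime_subfield_def)
  moreover have "inj_on (of_nat :: nat \<Rightarrow> 'f) {..<p}"
  proof
    fix i j assume ij: "i \<in> {..<p}" "j \<in> {..<p}" "(of_nat i :: 'f) = of_nat j"
    show "i = j"
    proof (rule ccontr)
      assume "i \<noteq> j"
      then consider "i < j" | "j < i" by linarith
      thus False
      proof cases
        case 1
        hence "p dvd (j - i)" using of_nat_eq_iff_char_dvd[OF 1] ij C by metis
        thus False using 1 ij by (simp add: nat_dvd_not_less)
      next
        case 2
        hence "p dvd (i - j)" using of_nat_eq_iff_char_dvd[OF 2] ij C by metis
        thus False using 2 ij by (simp add: nat_dvd_not_less)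
      qed
    qed
  qed
  ultimately show ?thesis by (metis card_image card_lessThan)
qed

lemma card_subfield_ge_2: "subfield K \<Longrightarrow> finite K \<Longrightarrow> card (K::'f::field set) \<ge> 2"
proof -
  assume "subfield K" "finite K"
  hence "{0,1} \<subseteq> K" using subfieldD by auto
  hence "card {0::'f,1} \<le> card K" using \<open>finite K\<close> card_mono by blast
  thus ?thesis by simp
qed

lemma subfield_power_card:
  fixes x :: "'f::field"
  assumes K: "subfield K" "finite K" and x: "x \<in> K"
  shows "x ^ card K = x"
proof (cases "x = 0")
  case True
  have "card K > 0" using K subfieldD(1)[OF K(1)] card_gt_0_iff by blast
  thus ?thesis using True by simp
next
  case False
  have ck: "card K > 0" using K subfieldD(1)[OF K(1)] card_gt_0_iff by blast
  have "(\<Prod>y\<in>K-{0}. x * y) = x ^ card (K - {0}) * \<Prod>(K-{0})"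
    by (simp add: prod.distrib)
  also have "card (K - {0}) = card K - 1" using K subfieldD(1)[OF K(1)] by simp
  also have "(\<Prod>y\<in>K-{0}. x * y) = (\<Prod>y\<in>K-{0}. y)"
    by (rule prod.reindex_bij_witness[of _ "\<lambda>y. y / x" "\<lambda>y. x * y"])
       (use False x K in \<open>auto simp: subfieldD subfield_divide\<close>)
  finally have "x ^ (card K - 1) = 1"
    using K by (simp add: prod_zero_iff)
  hence "x * x ^ (card K - 1) = x" by simp
  thus ?thesis using ck by (metis Suc_diff_1 power_Suc)
qed

lemma subfield_eq_roots:
  fixes K :: "'f::field set"
  assumes K: "subfield K" "finite K"
  shows "{z. z ^ card K = z} = K"
proof -
  let ?q = "card K"
  have q2: "?q \<ge> 2" using card_subfield_ge_2 K by blast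
  let ?P = "monom (1::'f) ?q - [:0, 1:]"
  have "coeff [:0::'f, 1:] ?q = 0" using q2 by (cases ?q) (auto simp: coeff_pCons split: nat.split)
  hence "coeff ?P ?q = 1" unfolding coeff_diff coeff_monom by simp
  hence P0: "?P \<noteq> 0" by (metis coeff_0 zero_neq_one)
  have degP: "degree ?P \<le> ?q"
    by (rule degree_diff_le) (use q2 in \<open>auto simp: degree_monom_le\<close>)
  have roots: "{z::'f. z ^ ?q = z} = {x. poly ?P x = 0}"
    by (auto simp: poly_monom)
  have fin: "finite {z::'f. z ^ ?q = z}" unfolding roots by (rule poly_roots_finite[OF P0])
  have "card {z::'f. z ^ ?q = z} \<le> ?q"
    unfolding roots using card_poly_roots_bound[OF P0] degP by linarith
  moreover have "K \<subseteq> {z::'f. z ^ ?q = z}" using subfield_power_card[OF K] by auto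
  ultimately show ?thesis using fin by (metis card_seteq)
qed

lemma frobenius_add:
  fixes a b :: "'f::field"
  assumes "prime CHAR('f)" "q = CHAR('f) ^ s"
  shows "(a + b) ^ (q ^ k) = a ^ (q ^ k) + b ^ (q ^ k)"
  using freshmans_dream'[OF assms(1), of "q ^ k" "s * k"] assms(2) by (simp add: power_mult)

lemma frobenius_sum:
  fixes f :: "'b \<Rightarrow> 'f::field"
  assumes "prime CHAR('f)" "q = CHAR('f) ^ s"
  shows "(sum f A) ^ (q ^ k) = (\<Sum>i\<in>A. f i ^ (q ^ k))"
  using freshmans_dream_sum'[OF assms(1), of "q ^ k" "s * k" f A] assms(2) by (simp add: power_mult)

lemma frobenius_inj:
  fixes a b :: "'f::field"
  assumes "prime CHAR('f)" "q = CHAR('f) ^ s" "a ^ (q ^ k) = b ^ (q ^ k)"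
  shows "a = b"
proof -
  have "(a - b) ^ (q ^ k) = 0" using frobenius_add[OF assms(1,2), of "a - b" b k] assms(3) by simp
  thus ?thesis by simp
qed

lemma frobenius_shift:
  fixes w :: "'f::{field,finite}"
  assumes "prime CHAR('f)" "q = CHAR('f) ^ s" "i \<le> j" "\<forall>z::'f. z ^ (q ^ i) = z ^ (q ^ j)"
  shows "w ^ (q ^ (j - i)) = w"
proof -
  have "inj (\<lambda>z::'f. z ^ (q ^ i))" using frobenius_inj[OF assms(1,2)] by (auto intro: injI)
  hence "surj (\<lambda>z::'f. z ^ (q ^ i))" using finite_UNIV_inj_surj[OF finite_UNIV] by blast
  then obtain z where z: "z ^ (q ^ i) = w" by (metis surjD)
  have "w ^ (q ^ (j - i)) = z ^ (q ^ i * q ^ (j - i))" using z by (simp add: power_mult)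
  also have "q ^ i * q ^ (j - i) = q ^ j" using assms(3) by (simp flip: power_add)
  finally show ?thesis using z assms(4) by simp
qed

lemma frobenius_period:
  fixes q :: nat
  assumes pC: "prime CHAR('f::{field,finite})" and qC: "q = CHAR('f) ^ s"
  obtains N where "0 < N" "\<And>z::'f. z ^ (q ^ N) = z"
    "\<And>k l. k < l \<Longrightarrow> l < N \<Longrightarrow> \<exists>z::'f. z ^ (q ^ k) \<noteq> z ^ (q ^ l)"
proof -
  define f where "f = (\<lambda>k::nat. (\<lambda>z::'f. z ^ (q ^ k)))"
  have "\<not> inj f"
  proof
    assume "inj f"
    hence "infinite (range f)" using finite_imageD infinite_UNIV_nat by blast
    thus False by simp
  qed
  then obtain i j where ij: "i < j" "f i = f j"
    unfolding inj_def by (metis linorder_neqE_nat)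
  have "\<forall>z::'f. z ^ (q ^ (j - i)) = z"
    using frobenius_shift[OF pC qC, of i j] ij unfolding f_def by (metis less_imp_le)
  hence exP: "\<exists>n. 0 < n \<and> (\<forall>z::'f. z ^ (q ^ n) = z)" using ij by (intro exI[of _ "j - i"]) auto
  define N where "N = (LEAST n. 0 < n \<and> (\<forall>z::'f. z ^ (q ^ n) = z))"
  have N: "0 < N" "\<forall>z::'f. z ^ (q ^ N) = z"
    using LeastI_ex[OF exP] unfolding N_def by auto
  have Nmin: "\<exists>z::'f. z ^ (q ^ n) \<noteq> z" if "0 < n" "n < N" for n
    using not_less_Least[of n "\<lambda>n. 0 < n \<and> (\<forall>z::'f. z ^ (q ^ n) = z)"] that unfolding N_def by auto
  have "\<exists>z::'f. z ^ (q ^ k) \<noteq> z ^ (q ^ l)" if kl: "k < l" "l < N" for k l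
  proof (rule ccontr)
    assume "\<not> ?thesis"
    hence "\<forall>w::'f. w ^ (q ^ (l - k)) = w" using frobenius_shift[OF pC qC, of k l] kl by auto
    moreover have "\<exists>z::'f. z ^ (q ^ (l - k)) \<noteq> z" using Nmin[of "l - k"] kl by auto
    ultimately show False by blast
  qed
  with N that show ?thesis by blast
qed

lemma power_eq_reduced_power:
  fixes z :: "'f::{field,finite}"
  assumes "0 < e"
  shows "z ^ e = z ^ ((e - 1) mod (card (UNIV :: 'f set) - 1) + 1)"
proof (cases "z = 0")
  case True
  thus ?thesis using assms by simp
next
  case False
  define n where "n = card (UNIV :: 'f set)"
  have n2: "n \<ge> 2" unfolding n_def by (rule card_subfield_ge_2[OF subfield_UNIV]) simp
  have "z * z ^ (n - 1) = z * 1"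
    using subfield_power_card[OF subfield_UNIV, of z] n2 unfolding n_def
    by (simp flip: power_Suc)
  hence zn1: "z ^ (n - 1) = 1" using False by simp
  have "e = (e - 1) div (n - 1) * (n - 1) + ((e - 1) mod (n - 1) + 1)"
    using assms div_mult_mod_eq[of "e - 1" "n - 1"] by linarith
  hence "z ^ e = (z ^ (n - 1)) ^ ((e - 1) div (n - 1)) * z ^ ((e - 1) mod (n - 1) + 1)"
    by (metis power_add power_mult mult.commute)
  thus ?thesis using zn1 unfolding n_def by simp
qed

text \<open>Exponents can be reduced into \<open>[1, CARD('f) - 1]\<close>, so the sum becomes a nonzero polynomial
  of degree less than \<open>CARD('f)\<close>, which cannot vanish everywhere.\<close>

lemma sum_distinct_power_maps_nonzero:
  fixes e :: "nat \<Rightarrow> nat"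
  assumes N: "0 < N" and e: "\<And>k. 0 < e k"
    and dist: "\<And>k l. k < l \<Longrightarrow> l < N \<Longrightarrow> \<exists>z::'f::{field,finite}. z ^ e k \<noteq> z ^ e l"
  shows "\<exists>z::'f. (\<Sum>k<N. z ^ e k) \<noteq> 0"
proof (rule ccontr)
  assume all0: "\<not> ?thesis"
  define n where "n = card (UNIV :: 'f set)"
  have n2: "n \<ge> 2" unfolding n_def by (rule card_subfield_ge_2[OF subfield_UNIV]) simp
  define r where "r = (\<lambda>k. (e k - 1) mod (n - 1) + 1)"
  have r_le: "r k \<le> n - 1" for k
    unfolding r_def using n2 by (auto simp: Suc_le_eq)
  have pow_r: "z ^ e k = z ^ r k" for z :: 'f and k
    unfolding r_def n_def by (rule power_eq_reduced_power[OF e])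
  have r_dist: "r k \<noteq> r l" if "k < l" "l < N" for k l
    using dist[OF that] pow_r by metis
  define P where "P = (\<Sum>k<N. monom (1::'f) (r k))"
  have coeffP: "coeff P i = (\<Sum>k<N. if r k = i then 1 else 0)" for i
    unfolding P_def by (simp add: coeff_sum coeff_monom)
  have "coeff P (r 0) = (\<Sum>k\<in>{0}. if r k = r 0 then 1 else 0)"
    unfolding coeffP
    by (rule sum.mono_neutral_right) (use N r_dist[of 0] in \<open>fastforce+\<close>)
  hence P0: "P \<noteq> 0" by auto
  have "degree P \<le> n - 1"
  proof (rule degree_le, intro allI impI)
    fix i assume "n - 1 < i"
    thus "coeff P i = 0" unfolding coeffP using r_le by (intro sum.neutral) (metis leD)
  qed
  moreover have "{x. poly P x = 0} = UNIV"
    using all0 unfolding P_def by (auto simp: poly_sum poly_monom pow_r)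
  ultimately have "n \<le> n - 1" using card_poly_roots_bound[OF P0] unfolding n_def by (metis le_trans)
  thus False using n2 by simp
qed

section \<open>Matrices with entries in a subset\<close>

definition vecs_over :: "'a set \<Rightarrow> nat \<Rightarrow> 'a vec set" where
  "vecs_over K n = {v \<in> carrier_vec n. \<forall>i<n. v $ i \<in> K}"

definition colmat :: "nat \<Rightarrow> 'a::zero vec \<Rightarrow> 'a mat" where
  "colmat m y = mat m m (\<lambda>(i,j). if j = 0 then y $ i else 0)"

lemma card_vecs_over:
  assumes "finite K"
  shows "card (vecs_over K n) = card K ^ n"
proof -
  have "bij_betw (\<lambda>v. \<lambda>i\<in>{..<n}. v $ i) (vecs_over K n) (PiE {..<n} (\<lambda>_. K))"
  proof (rule bij_betw_byWitness[where f' = "\<lambda>f. vec n f"])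
    show "\<forall>a\<in>vecs_over K n. vec n (\<lambda>i\<in>{..<n}. a $ i) = a"
      unfolding vecs_over_def by (auto intro!: eq_vecI)
    show "\<forall>a'\<in>PiE {..<n} (\<lambda>_. K). (\<lambda>i\<in>{..<n}. vec n a' $ i) = a'"
      by (auto simp: PiE_def extensional_def fun_eq_iff)
    show "(\<lambda>v. \<lambda>i\<in>{..<n}. v $ i) ` vecs_over K n \<subseteq> PiE {..<n} (\<lambda>_. K)"
    proof
      fix f assume "f \<in> (\<lambda>v. \<lambda>i\<in>{..<n}. v $ i) ` vecs_over K n"
      then obtain v where v: "v \<in> vecs_over K n" "f = (\<lambda>i\<in>{..<n}. v $ i)" by blast
      have "\<forall>i\<in>{..<n}. v $ i \<in> K" using v(1) unfolding vecs_over_def by auto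
      thus "f \<in> PiE {..<n} (\<lambda>_. K)" unfolding v(2) by (simp add: restrict_PiE_iff)
    qed
    show "(\<lambda>f. vec n f) ` PiE {..<n} (\<lambda>_. K) \<subseteq> vecs_over K n"
      unfolding vecs_over_def by (auto simp: PiE_def)
  qed
  hence "card (vecs_over K n) = card (PiE {..<n} (\<lambda>_. K))" by (rule bij_betw_same_card)
  also have "\<dots> = card K ^ n" by (simp add: card_PiE)
  finally show ?thesis .
qed

lemma unit_vec_in_vecs_over: "0 \<in> K \<Longrightarrow> 1 \<in> K \<Longrightarrow> k < n \<Longrightarrow> unit_vec n k \<in> vecs_over K n"
  unfolding vecs_over_def by auto

lemma mat_vec_unit: "(A::'a::field mat) \<in> carrier_mat r n \<Longrightarrow> k < n \<Longrightarrow> i < r \<Longrightarrow> (A *\<^sub>v unit_vec n k) $ i = A $$ (i, k)"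
  by (simp add: row_def)

lemma mat_eq_on_vecs:
  assumes "(A::'a::field mat) \<in> carrier_mat r n" "B \<in> carrier_mat r n" "0 \<in> K" "1 \<in> K"
    "\<And>w. w \<in> vecs_over K n \<Longrightarrow> A *\<^sub>v w = B *\<^sub>v w"
  shows "A = B"
proof (rule eq_matI)
  fix i k assume ik: "i < dim_row B" "k < dim_col B"
  have "A *\<^sub>v unit_vec n k = B *\<^sub>v unit_vec n k"
    using assms ik unit_vec_in_vecs_over[of K k n] by auto
  thus "A $$ (i, k) = B $$ (i, k)" using mat_vec_unit assms ik by (metis carrier_matD)
qed (use assms in auto)

lemma homogeneous_map_zero:
  fixes \<Theta> :: "'a::field vec \<Rightarrow> 'a vec"
  assumes K: "0 \<in> K" and into: "\<And>w. w \<in> vecs_over K n \<Longrightarrow> \<Theta> w \<in> vecs_over K n"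
    and hom: "\<And>c a. c \<in> K \<Longrightarrow> a \<in> vecs_over K n \<Longrightarrow> \<Theta> (c \<cdot>\<^sub>v a) = c \<cdot>\<^sub>v \<Theta> a"
  shows "\<Theta> (0\<^sub>v n) = 0\<^sub>v n"
proof -
  have z: "0\<^sub>v n \<in> vecs_over K n" using K unfolding vecs_over_def by auto
  have "\<Theta> (0 \<cdot>\<^sub>v 0\<^sub>v n) = 0 \<cdot>\<^sub>v \<Theta> (0\<^sub>v n)" using hom[OF K z] .
  moreover have "0 \<cdot>\<^sub>v (0\<^sub>v n :: 'a vec) = 0\<^sub>v n" by auto
  moreover have "0 \<cdot>\<^sub>v \<Theta> (0\<^sub>v n) = 0\<^sub>v n" using into[OF z] unfolding vecs_over_def by auto
  ultimately show ?thesis by simp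
qed

lemma linear_map_eq_mat_mult_vec:
  fixes \<Theta> :: "'a::field vec \<Rightarrow> 'a vec"
  assumes K: "0 \<in> K" "1 \<in> K" "\<And>x y. x \<in> K \<Longrightarrow> y \<in> K \<Longrightarrow> x + y \<in> K"
    "\<And>x y. x \<in> K \<Longrightarrow> y \<in> K \<Longrightarrow> x * y \<in> K"
  and into: "\<And>w. w \<in> vecs_over K n \<Longrightarrow> \<Theta> w \<in> vecs_over K n"
  and add: "\<And>a b. a \<in> vecs_over K n \<Longrightarrow> b \<in> vecs_over K n \<Longrightarrow> \<Theta> (a + b) = \<Theta> a + \<Theta> b"
  and hom: "\<And>c a. c \<in> K \<Longrightarrow> a \<in> vecs_over K n \<Longrightarrow> \<Theta> (c \<cdot>\<^sub>v a) = c \<cdot>\<^sub>v \<Theta> a"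
  and Mc: "M \<in> carrier_mat n n" and Mu: "\<And>k. k < n \<Longrightarrow> M *\<^sub>v unit_vec n k = \<Theta> (unit_vec n k)"
  and w: "w \<in> vecs_over K n"
  shows "M *\<^sub>v w = \<Theta> w"
proof -
  have uv: "unit_vec n k \<in> vecs_over K n" if "k < n" for k using unit_vec_in_vecs_over K that by blast
  define tr where "tr = (\<lambda>j. vec n (\<lambda>i. if i < j then w $ i else 0))"
  have trV: "tr j \<in> vecs_over K n" for j
    using w K unfolding tr_def vecs_over_def by auto
  have zero: "\<Theta> (0\<^sub>v n) = 0\<^sub>v n" by (rule homogeneous_map_zero[OF K(1) into hom])
  have "M *\<^sub>v tr j = \<Theta> (tr j)" for j
  proof (induction j)
    case 0
    have "tr 0 = 0\<^sub>v n" unfolding tr_def by auto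
    moreover have "M *\<^sub>v 0\<^sub>v n = 0\<^sub>v n" using Mc by (intro eq_vecI) (auto simp: scalar_prod_def)
    ultimately show ?case using zero by simp
  next
    case (Suc j)
    show ?case
    proof (cases "j < n")
      case True
      have e: "tr (Suc j) = tr j + w $ j \<cdot>\<^sub>v unit_vec n j"
        unfolding tr_def using True by (intro eq_vecI) (auto simp: less_Suc_eq)
      have wj: "w $ j \<in> K" using w True unfolding vecs_over_def by auto
      have "M *\<^sub>v tr (Suc j) = M *\<^sub>v tr j + w $ j \<cdot>\<^sub>v (M *\<^sub>v unit_vec n j)"
        unfolding e using Mc trV[of j] unfolding vecs_over_def
        by (simp add: mult_add_distrib_mat_vec mult_mat_vec)
      also have "\<dots> = \<Theta> (tr j) + \<Theta> (w $ j \<cdot>\<^sub>v unit_vec n j)"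
        using Suc Mu[OF True] hom[OF wj uv[OF True]] by simp
      also have "\<dots> = \<Theta> (tr (Suc j))"
        unfolding e
      proof (rule add[symmetric, OF trV])
        show "w $ j \<cdot>\<^sub>v unit_vec n j \<in> vecs_over K n"
          using uv[OF True] wj K unfolding vecs_over_def by auto
      qed
      finally show ?thesis .
    next
      case False
      hence "tr (Suc j) = tr j" unfolding tr_def by (intro eq_vecI) auto
      thus ?thesis using Suc by simp
    qed
  qed
  moreover have "tr n = w" using w unfolding tr_def vecs_over_def by (intro eq_vecI) auto
  ultimately show ?thesis by metis
qed

lemma linear_map_matrix:
  fixes \<Theta> :: "'a::field vec \<Rightarrow> 'a vec"
  assumes K: "0 \<in> K" "1 \<in> K" "\<And>x y. x \<in> K \<Longrightarrow> y \<in> K \<Longrightarrow> x + y \<in> K"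
    "\<And>x y. x \<in> K \<Longrightarrow> y \<in> K \<Longrightarrow> x * y \<in> K"
  and into: "\<And>w. w \<in> vecs_over K n \<Longrightarrow> \<Theta> w \<in> vecs_over K n"
  and add: "\<And>a b. a \<in> vecs_over K n \<Longrightarrow> b \<in> vecs_over K n \<Longrightarrow> \<Theta> (a + b) = \<Theta> a + \<Theta> b"
  and hom: "\<And>c a. c \<in> K \<Longrightarrow> a \<in> vecs_over K n \<Longrightarrow> \<Theta> (c \<cdot>\<^sub>v a) = c \<cdot>\<^sub>v \<Theta> a"
  and w: "w \<in> vecs_over K n"
  shows "mat n n (\<lambda>(i,k). \<Theta> (unit_vec n k) $ i) *\<^sub>v w = \<Theta> w"
proof (rule linear_map_eq_mat_mult_vec[OF K into add hom _ _ w])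
  let ?M = "mat n n (\<lambda>(i,k). \<Theta> (unit_vec n k) $ i)"
  show Mc: "?M \<in> carrier_mat n n" by simp
  fix k assume k: "k < n"
  have into_k: "\<Theta> (unit_vec n k) \<in> carrier_vec n"
    using into[OF unit_vec_in_vecs_over[OF K(1,2) k]] unfolding vecs_over_def by auto
  show "?M *\<^sub>v unit_vec n k = \<Theta> (unit_vec n k)"
    by (rule eq_vecI) (use mat_vec_unit[OF Mc k] into_k k in auto)
qed

lemma colmat_carrier[simp]: "colmat m y \<in> carrier_mat m m"
  unfolding colmat_def by simp

lemma colmat_dims[simp]: "dim_row (colmat m y) = m" "dim_col (colmat m y) = m"
  unfolding colmat_def by simp_all

lemma colmat_mult:
  assumes "x \<in> carrier_mat m m" "y \<in> carrier_vec m"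
  shows "x * colmat m y = colmat m (x *\<^sub>v y)"
proof (rule eq_matI)
  fix i j assume ij: "i < dim_row (colmat m (x *\<^sub>v y))" "j < dim_col (colmat m (x *\<^sub>v y))"
  hence ij': "i < m" "j < m" by (auto simp: colmat_def)
  have "(x * colmat m y) $$ (i, j) = (\<Sum>k<m. x $$ (i, k) * colmat m y $$ (k, j))"
    using assms ij' by (simp add: scalar_prod_def atLeast0LessThan)
  also have "\<dots> = (if j = 0 then (\<Sum>k<m. x $$ (i, k) * y $ k) else 0)"
    using ij' by (auto simp: colmat_def)
  also have "\<dots> = colmat m (x *\<^sub>v y) $$ (i, j)"
    using assms ij' by (simp add: colmat_def scalar_prod_def atLeast0LessThan row_def)
  finally show "(x * colmat m y) $$ (i, j) = colmat m (x *\<^sub>v y) $$ (i, j)" .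
qed (use assms in \<open>auto simp: colmat_def\<close>)

lemma colmat_add: "(y::'a::comm_ring_1 vec) \<in> carrier_vec m \<Longrightarrow> z \<in> carrier_vec m \<Longrightarrow> colmat m (y + z) = colmat m y + colmat m z"
  unfolding colmat_def by (rule eq_matI) auto

lemma colmat_smult: "y \<in> carrier_vec m \<Longrightarrow> colmat m (c \<cdot>\<^sub>v y) = (c::'a::ring) \<cdot>\<^sub>m colmat m y"
  unfolding colmat_def by (rule eq_matI) auto

lemma colmat_over: "subfield E \<Longrightarrow> y \<in> vecs_over E m \<Longrightarrow> colmat m y \<in> mats_over E m m"
  unfolding colmat_def mats_over_def vecs_over_def using subfieldD(1) by auto

lemma mats_over_carrier: "A \<in> mats_over K r c \<Longrightarrow> A \<in> carrier_mat r c"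
  unfolding mats_over_def by auto

lemma vecs_over_carrier: "v \<in> vecs_over K n \<Longrightarrow> v \<in> carrier_vec n"
  unfolding vecs_over_def by auto

lemma mats_over_mult_vec:
  assumes K: "0 \<in> K" "\<And>x y. x \<in> K \<Longrightarrow> y \<in> K \<Longrightarrow> x + y \<in> K"
    "\<And>x y. x \<in> K \<Longrightarrow> y \<in> K \<Longrightarrow> x * y \<in> K"
    and A: "A \<in> mats_over K r n" and v: "v \<in> vecs_over K n"
  shows "A *\<^sub>v v \<in> vecs_over K r"
proof -
  have sumK: "sum f S \<in> K" if "\<And>i. i \<in> S \<Longrightarrow> f i \<in> K" for f :: "nat \<Rightarrow> _" and S
    using that by (induction S rule: infinite_finite_induct) (auto simp: K)
  show ?thesis using A v unfolding mats_over_def vecs_over_def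
    by (auto simp: scalar_prod_def intro!: sumK K(3))
qed

lemma mats_over_mult:
  assumes K: "0 \<in> K" "\<And>x y. x \<in> K \<Longrightarrow> y \<in> K \<Longrightarrow> x + y \<in> K"
    "\<And>x y. x \<in> K \<Longrightarrow> y \<in> K \<Longrightarrow> x * y \<in> K"
    and A: "A \<in> mats_over K r n" and B: "B \<in> mats_over K n c"
  shows "A * B \<in> mats_over K r c"
proof -
  have sumK: "sum f S \<in> K" if "\<And>i. i \<in> S \<Longrightarrow> f i \<in> K" for f :: "nat \<Rightarrow> _" and S
    using that by (induction S rule: infinite_finite_induct) (auto simp: K)
  show ?thesis using A B unfolding mats_over_def
    by (auto simp: scalar_prod_def intro!: sumK K(3))
qed

lemma mat_add_cancel_right:
  fixes A B C :: "'a::ab_group_add mat"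
  assumes "A \<in> carrier_mat r c" "B \<in> carrier_mat r c" "C \<in> carrier_mat r c" "A + B = C"
  shows "A = C - B"
proof (rule eq_matI)
  fix i j assume "i < dim_row (C - B)" "j < dim_col (C - B)"
  hence ij: "i < r" "j < c" using assms by auto
  have "(A + B) $$ (i, j) = C $$ (i, j)" using assms(4) by simp
  thus "A $$ (i, j) = (C - B) $$ (i, j)" using ij assms by (auto simp: algebra_simps)
qed (use assms in auto)

lemma vec_add_cancel_right:
  fixes a b c :: "'a::ab_group_add vec"
  assumes "a \<in> carrier_vec n" "b \<in> carrier_vec n" "c \<in> carrier_vec n" "a + b = c"
  shows "a = c - b"
proof (rule eq_vecI)
  fix i assume "i < dim_vec (c - b)"
  hence i: "i < n" using assms by auto
  have "(a + b) $ i = c $ i" using assms(4) by simp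
  thus "a $ i = (c - b) $ i" using i assms by (auto simp: algebra_simps)
qed (use assms in auto)

section \<open>The simple module of an embedded matrix algebra\<close>

locale matrix_embedding =
  fixes E :: "'f::{field,finite} set" and m s p :: nat and \<iota> :: "'f mat \<Rightarrow> 'f mat"
  assumes sfE: "subfield E" and emb: "unital_embedding E m s \<iota>" and mpos: "0 < m"
    and cardE: "card E = p ^ s" and cardFp: "card (prime_subfield :: 'f set) = p"
begin

abbreviation "ME \<equiv> mats_over E m m"
abbreviation "V \<equiv> vecs_over (prime_subfield::'f set) (m * s)"
abbreviation "Em \<equiv> vecs_over E m"

lemma prime_subfield_subset_E: "prime_subfield \<subseteq> E" using prime_subfield_subset[OF sfE] .

lemma E_zero: "0 \<in> E" and E_one: "1 \<in> E" using subfieldD[OF sfE] by auto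

lemma s_pos: "0 < s"
proof (rule ccontr)
  assume "\<not> 0 < s"
  hence "card E = 1" using cardE by simp
  thus False using card_subfield_ge_2[OF sfE] by simp
qed

lemma ms_pos: "0 < m * s" using mpos s_pos by simp

lemma iota_over: "x \<in> ME \<Longrightarrow> \<iota> x \<in> mats_over prime_subfield (m * s) (m * s)"
  using emb unfolding unital_embedding_def by auto

lemma iota_carrier: "x \<in> ME \<Longrightarrow> \<iota> x \<in> carrier_mat (m * s) (m * s)"
  using iota_over mats_over_carrier by blast

lemma iota_add: "x \<in> ME \<Longrightarrow> y \<in> ME \<Longrightarrow> \<iota> (x + y) = \<iota> x + \<iota> y"
  and iota_mult: "x \<in> ME \<Longrightarrow> y \<in> ME \<Longrightarrow> \<iota> (x * y) = \<iota> x * \<iota> y"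
  and iota_smult: "c \<in> prime_subfield \<Longrightarrow> x \<in> ME \<Longrightarrow> \<iota> (c \<cdot>\<^sub>m x) = c \<cdot>\<^sub>m \<iota> x"
  and iota_inj: "inj_on \<iota> ME"
  using emb unfolding unital_embedding_def by auto

lemma ME_carrier: "x \<in> ME \<Longrightarrow> x \<in> carrier_mat m m" using mats_over_carrier by blast

lemma ME_mult: "x \<in> ME \<Longrightarrow> y \<in> ME \<Longrightarrow> x * y \<in> ME"
  by (rule mats_over_mult) (auto simp: subfieldD[OF sfE])

lemma ME_one: "1\<^sub>m m \<in> ME" and ME_zero: "0\<^sub>m m m \<in> ME"
  unfolding mats_over_def using E_zero E_one by auto

lemma ME_smult: "c \<in> E \<Longrightarrow> x \<in> ME \<Longrightarrow> c \<cdot>\<^sub>m x \<in> ME"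
  unfolding mats_over_def using subfieldD[OF sfE] by auto

lemma ME_scalar: "c \<in> E \<Longrightarrow> c \<cdot>\<^sub>m 1\<^sub>m m \<in> ME"
  using ME_smult ME_one by blast

lemma Em_mult: "x \<in> ME \<Longrightarrow> y \<in> Em \<Longrightarrow> x *\<^sub>v y \<in> Em"
  by (rule mats_over_mult_vec) (auto simp: subfieldD[OF sfE])

lemma V_mult: "A \<in> mats_over prime_subfield (m * s) (m * s) \<Longrightarrow> w \<in> V \<Longrightarrow> A *\<^sub>v w \<in> V"
  by (rule mats_over_mult_vec) (auto simp: prime_subfield_0 prime_subfield_add prime_subfield_mult)

lemma prime_subfield_mats_mult: "A \<in> mats_over prime_subfield (m * s) (m * s) \<Longrightarrow> B \<in> mats_over prime_subfield (m * s) (m * s)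
   \<Longrightarrow> A * B \<in> mats_over prime_subfield (m * s) (m * s)"
  by (rule mats_over_mult) (auto simp: prime_subfield_0 prime_subfield_add prime_subfield_mult)

lemma unit_vec_V: "k < m * s \<Longrightarrow> unit_vec (m * s) k \<in> V"
  by (rule unit_vec_in_vecs_over) (auto simp: prime_subfield_0 prime_subfield_1)

lemma iota_zero: "\<iota> (0\<^sub>m m m) = 0\<^sub>m (m * s) (m * s)"
proof -
  have "\<iota> (0\<^sub>m m m) + \<iota> (0\<^sub>m m m) = \<iota> (0\<^sub>m m m)"
    using iota_add[OF ME_zero ME_zero] by simp
  hence "\<iota> (0\<^sub>m m m) = \<iota> (0\<^sub>m m m) - \<iota> (0\<^sub>m m m)"
    using mat_add_cancel_right iota_carrier[OF ME_zero] by blast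
  thus ?thesis using iota_carrier[OF ME_zero] by (auto intro!: eq_matI)
qed

text \<open>Let \<open>v\<^sub>0 \<noteq> 0\<close> be fixed by the idempotent \<open>\<iota>(E\<^sub>1\<^sub>1)\<close>. Then \<open>\<psi>(y) = \<iota>(y e\<^sub>1\<^sup>T) v\<^sub>0\<close> is a map of
  \<open>M\<^sub>m(E)\<close>-modules \<open>E\<^sup>m \<rightarrow> \<bbbF>\<^sub>p\<^sup>m\<^sup>s\<close>; it is injective because \<open>E\<^sup>m\<close> is simple, hence bijective since
  \<open>|E|\<^sup>m = p\<^sup>m\<^sup>s\<close>. So all matrix computations over \<open>\<bbbF>\<^sub>p\<close> can be pulled back to \<open>E\<^sup>m\<close>.\<close>

definition e11 :: "'f mat" where "e11 = colmat m (unit_vec m 0)"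

lemma unit_vec_Em: "unit_vec m 0 \<in> Em" by (rule unit_vec_in_vecs_over) (use E_zero E_one mpos in auto)

lemma e11_ME: "e11 \<in> ME" unfolding e11_def using colmat_over[OF sfE unit_vec_Em] .

lemma e11_vec: "e11 *\<^sub>v unit_vec m 0 = unit_vec m 0"
  unfolding e11_def colmat_def using mpos by (intro eq_vecI) (auto simp: row_def)

lemma e11_idem: "e11 * e11 = e11"
proof -
  have "e11 * e11 = colmat m (e11 *\<^sub>v unit_vec m 0)"
    unfolding e11_def by (rule colmat_mult) simp_all
  thus ?thesis using e11_vec e11_def by simp
qed

lemma exists_v0: "\<exists>v. v \<in> V \<and> v \<noteq> 0\<^sub>v (m * s) \<and> \<iota> e11 *\<^sub>v v = v"
proof -
  have "e11 \<noteq> 0\<^sub>m m m"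
  proof
    assume "e11 = 0\<^sub>m m m"
    hence "e11 $$ (0, 0) = 0" using mpos by simp
    thus False unfolding e11_def colmat_def using mpos by simp
  qed
  hence ne: "\<iota> e11 \<noteq> 0\<^sub>m (m * s) (m * s)"
    using iota_inj e11_ME ME_zero iota_zero unfolding inj_on_def by metis
  have "\<exists>k < m * s. \<iota> e11 *\<^sub>v unit_vec (m * s) k \<noteq> 0\<^sub>v (m * s)"
  proof (rule ccontr)
    assume nz: "\<not> ?thesis"
    have "\<iota> e11 = 0\<^sub>m (m * s) (m * s)"
    proof (rule eq_matI)
      fix i k assume ik: "i < dim_row (0\<^sub>m (m * s) (m * s) :: 'f mat)" "k < dim_col (0\<^sub>m (m * s) (m * s) :: 'f mat)"
      hence ik': "i < m * s" "k < m * s" by auto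
      have "\<iota> e11 $$ (i, k) = (\<iota> e11 *\<^sub>v unit_vec (m * s) k) $ i"
        using mat_vec_unit[OF iota_carrier[OF e11_ME] ik'(2) ik'(1)] by simp
      also have "\<dots> = 0" using nz ik' by auto
      finally show "\<iota> e11 $$ (i, k) = 0\<^sub>m (m * s) (m * s) $$ (i, k)" using ik' by simp
    qed (use iota_carrier[OF e11_ME] in auto)
    thus False using ne by simp
  qed
  then obtain k where k: "k < m * s" "\<iota> e11 *\<^sub>v unit_vec (m * s) k \<noteq> 0\<^sub>v (m * s)" by blast
  let ?v = "\<iota> e11 *\<^sub>v unit_vec (m * s) k"
  have "?v \<in> V" using V_mult[OF iota_over[OF e11_ME] unit_vec_V[OF k(1)]] .
  moreover have "\<iota> e11 *\<^sub>v ?v = ?v"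
  proof -
    have "\<iota> e11 *\<^sub>v ?v = (\<iota> e11 * \<iota> e11) *\<^sub>v unit_vec (m * s) k"
      using iota_carrier[OF e11_ME] by simp
    thus ?thesis using iota_mult[OF e11_ME e11_ME] e11_idem by simp
  qed
  ultimately show ?thesis using k by blast
qed

definition v0 :: "'f vec" where "v0 = (SOME v. v \<in> V \<and> v \<noteq> 0\<^sub>v (m * s) \<and> \<iota> e11 *\<^sub>v v = v)"

lemma v0: "v0 \<in> V" "v0 \<noteq> 0\<^sub>v (m * s)" "\<iota> e11 *\<^sub>v v0 = v0"
  using someI_ex[OF exists_v0] unfolding v0_def by auto

lemma v0_carrier: "v0 \<in> carrier_vec (m * s)" using v0(1) vecs_over_carrier by blast

definition psi :: "'f vec \<Rightarrow> 'f vec" where "psi y = \<iota> (colmat m y) *\<^sub>v v0"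

lemma psi_V: "y \<in> Em \<Longrightarrow> psi y \<in> V"
  unfolding psi_def using V_mult iota_over colmat_over[OF sfE] v0(1) by blast

lemma psi_carrier: "y \<in> Em \<Longrightarrow> psi y \<in> carrier_vec (m * s)"
  using psi_V vecs_over_carrier by blast

lemma psi_mult: "x \<in> ME \<Longrightarrow> y \<in> Em \<Longrightarrow> \<iota> x *\<^sub>v psi y = psi (x *\<^sub>v y)"
proof -
  assume x: "x \<in> ME" and y: "y \<in> Em"
  have c: "colmat m y \<in> ME" using colmat_over[OF sfE y] .
  have "\<iota> x *\<^sub>v psi y = (\<iota> x * \<iota> (colmat m y)) *\<^sub>v v0"
    unfolding psi_def using iota_carrier[OF x] iota_carrier[OF c] v0_carrier by simp
  also have "\<dots> = \<iota> (x * colmat m y) *\<^sub>v v0" using iota_mult[OF x c] by simp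
  also have "x * colmat m y = colmat m (x *\<^sub>v y)"
    using colmat_mult ME_carrier[OF x] vecs_over_carrier[OF y] by blast
  finally show ?thesis unfolding psi_def .
qed

lemma psi_add: "y \<in> Em \<Longrightarrow> z \<in> Em \<Longrightarrow> psi (y + z) = psi y + psi z"
proof -
  assume y: "y \<in> Em" and z: "z \<in> Em"
  have "colmat m (y + z) = colmat m y + colmat m z"
    using colmat_add vecs_over_carrier y z by blast
  thus ?thesis unfolding psi_def
    using iota_add[OF colmat_over[OF sfE y] colmat_over[OF sfE z]]
      iota_carrier[OF colmat_over[OF sfE y]] iota_carrier[OF colmat_over[OF sfE z]] v0_carrier
    by (simp add: add_mult_distrib_mat_vec)
qed

lemma Em_add: "y \<in> Em \<Longrightarrow> z \<in> Em \<Longrightarrow> y + z \<in> Em"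
  unfolding vecs_over_def using subfieldD[OF sfE] by auto

lemma Em_minus: "y \<in> Em \<Longrightarrow> z \<in> Em \<Longrightarrow> y - z \<in> Em"
  unfolding vecs_over_def using subfield_diff[OF sfE] by auto

lemma Em_smult: "c \<in> E \<Longrightarrow> y \<in> Em \<Longrightarrow> c \<cdot>\<^sub>v y \<in> Em"
  unfolding vecs_over_def using subfieldD[OF sfE] by auto

lemma psi_diff: "y \<in> Em \<Longrightarrow> z \<in> Em \<Longrightarrow> psi (y - z) = psi y - psi z"
proof -
  assume y: "y \<in> Em" and z: "z \<in> Em"
  have "(y - z) + z = y" using vecs_over_carrier[OF y] vecs_over_carrier[OF z] by (intro eq_vecI) auto
  hence "psi (y - z) + psi z = psi y" using psi_add[OF Em_minus[OF y z] z] by simp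
  thus ?thesis using vec_add_cancel_right psi_carrier Em_minus y z by blast
qed

lemma psi_smult: "c \<in> prime_subfield \<Longrightarrow> y \<in> Em \<Longrightarrow> psi (c \<cdot>\<^sub>v y) = c \<cdot>\<^sub>v psi y"
proof -
  assume c: "c \<in> prime_subfield" and y: "y \<in> Em"
  have "colmat m (c \<cdot>\<^sub>v y) = c \<cdot>\<^sub>m colmat m y" using colmat_smult vecs_over_carrier y by blast
  thus ?thesis unfolding psi_def using iota_smult[OF c colmat_over[OF sfE y]]
      iota_carrier[OF colmat_over[OF sfE y]] v0_carrier
    by (auto intro!: eq_vecI simp: scalar_prod_def sum_distrib_left mult.assoc)
qed

lemma psi_eq_zero_imp: "y \<in> Em \<Longrightarrow> psi y = 0\<^sub>v (m * s) \<Longrightarrow> y = 0\<^sub>v m"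
proof (rule ccontr)
  assume y: "y \<in> Em" and p0: "psi y = 0\<^sub>v (m * s)" and ne: "y \<noteq> 0\<^sub>v m"
  have "\<exists>i<m. y $ i \<noteq> 0"
  proof (rule ccontr)
    assume "\<not> ?thesis"
    hence "y = 0\<^sub>v m" using vecs_over_carrier[OF y] by (intro eq_vecI) auto
    thus False using ne by simp
  qed
  then obtain i where i: "i < m" "y $ i \<noteq> 0" by blast
  define R where "R = mat m m (\<lambda>(a,b). if a = 0 \<and> b = i then inverse (y $ i) else (0::'f))"
  have R: "R \<in> ME" unfolding R_def mats_over_def using y i subfieldD[OF sfE] unfolding vecs_over_def by auto
  have Ry: "R *\<^sub>v y = unit_vec m 0"
  proof (rule eq_vecI)
    fix a assume "a < dim_vec (unit_vec m 0::'f vec)"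
    hence a: "a < m" by simp
    have "(R *\<^sub>v y) $ a = (\<Sum>b<m. R $$ (a, b) * y $ b)"
      using a vecs_over_carrier[OF y] unfolding R_def by (simp add: scalar_prod_def row_def atLeast0LessThan)
    also have "\<dots> = (\<Sum>b\<in>{i}. R $$ (a, b) * y $ b)"
      by (rule sum.mono_neutral_right) (use i a in \<open>auto simp: R_def\<close>)
    also have "\<dots> = unit_vec m 0 $ a" using a i mpos unfolding R_def by auto
    finally show "(R *\<^sub>v y) $ a = unit_vec m 0 $ a" .
  qed (simp add: R_def)
  have "\<iota> R *\<^sub>v psi y = psi (unit_vec m 0)" using psi_mult[OF R y] Ry by simp
  also have "psi (unit_vec m 0) = v0" unfolding psi_def e11_def[symmetric] using v0 by simp
  finally have "v0 = \<iota> R *\<^sub>v 0\<^sub>v (m * s)" using p0 by simp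
  also have "\<dots> = 0\<^sub>v (m * s)" using iota_carrier[OF R] by (intro eq_vecI) (auto simp: scalar_prod_def)
  finally show False using v0(2) by simp
qed

lemma psi_inj: "inj_on psi Em"
proof
  fix y z assume y: "y \<in> Em" and z: "z \<in> Em" and e: "psi y = psi z"
  have "psi (y - z) = 0\<^sub>v (m * s)" using psi_diff[OF y z] e psi_carrier[OF z] by auto
  hence "y - z = 0\<^sub>v m" using psi_eq_zero_imp Em_minus[OF y z] by blast
  show "y = z"
  proof (rule eq_vecI)
    fix i assume i: "i < dim_vec z"
    hence "(y - z) $ i = 0" using \<open>y - z = 0\<^sub>v m\<close> vecs_over_carrier[OF z] by simp
    thus "y $ i = z $ i" using i vecs_over_carrier[OF y] vecs_over_carrier[OF z] by simp
  qed (use vecs_over_carrier[OF y] vecs_over_carrier[OF z] in auto)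
qed

lemma psi_onto: "psi ` Em = V"
proof -
  have sub: "psi ` Em \<subseteq> V" using psi_V by blast
  have "card (psi ` Em) = card Em" using card_image[OF psi_inj] .
  also have "\<dots> = p ^ (m * s)" using card_vecs_over[of E m] cardE by (simp add: power_mult[symmetric] mult.commute)
  also have "\<dots> = card V" using card_vecs_over[of "prime_subfield :: 'f set" "m * s"] cardFp by simp
  finally have cc: "card (psi ` Em) = card V" .
  have "card (prime_subfield :: 'f set) > 0" using prime_subfield_0 by (auto simp: card_gt_0_iff)
  hence "card V > 0" using card_vecs_over[of "prime_subfield :: 'f set" "m * s"] by simp
  hence "finite V" using card_gt_0_iff by blast
  thus ?thesis using sub cc by (intro card_subset_eq) simp_all
qed

definition psiinv :: "'f vec \<Rightarrow> 'f vec" where "psiinv = the_inv_into Em psi"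

lemma psiinv: "w \<in> V \<Longrightarrow> psiinv w \<in> Em \<and> psi (psiinv w) = w"
  unfolding psiinv_def using the_inv_into_into[OF psi_inj, of w Em] f_the_inv_into_f[OF psi_inj, of w] psi_onto
  by auto

lemma psiinv_psi: "y \<in> Em \<Longrightarrow> psiinv (psi y) = y"
  unfolding psiinv_def using psi_inj by (rule the_inv_into_f_f)

lemma mat_eq_on_psi:
  assumes "A \<in> carrier_mat (m * s) (m * s)" "B \<in> carrier_mat (m * s) (m * s)"
    "\<And>y. y \<in> Em \<Longrightarrow> A *\<^sub>v psi y = B *\<^sub>v psi y"
  shows "A = B"
  by (rule mat_eq_on_vecs[OF assms(1,2) prime_subfield_0 prime_subfield_1])
     (metis assms(3) psi_onto imageE)

lemma psiinv_add: "a \<in> V \<Longrightarrow> b \<in> V \<Longrightarrow> psiinv (a + b) = psiinv a + psiinv b"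
proof -
  assume a: "a \<in> V" and b: "b \<in> V"
  have "psi (psiinv a + psiinv b) = a + b" using psi_add psiinv a b by metis
  hence "psiinv (a + b) = psiinv (psi (psiinv a + psiinv b))" by simp
  also have "\<dots> = psiinv a + psiinv b" using psiinv_psi Em_add psiinv a b by metis
  finally show ?thesis .
qed

lemma psiinv_smult: "c \<in> prime_subfield \<Longrightarrow> a \<in> V \<Longrightarrow> psiinv (c \<cdot>\<^sub>v a) = c \<cdot>\<^sub>v psiinv a"
proof -
  assume c: "c \<in> prime_subfield" and a: "a \<in> V"
  have cE: "c \<in> E" using c prime_subfield_subset_E by blast
  have "psi (c \<cdot>\<^sub>v psiinv a) = c \<cdot>\<^sub>v a" using psi_smult[OF c] psiinv a by metis
  hence "psiinv (c \<cdot>\<^sub>v a) = psiinv (psi (c \<cdot>\<^sub>v psiinv a))" by simp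
  also have "\<dots> = c \<cdot>\<^sub>v psiinv a" using psiinv_psi Em_smult[OF cE] psiinv a by metis
  finally show ?thesis .
qed

end

locale embedding_pair = A: matrix_embedding E m s p \<iota> + B: matrix_embedding E m s p \<iota>'
  for E :: "'f::{field,finite} set" and m s p \<iota> \<iota>'
begin

lemma exists_psi_transport:
  assumes Q: "Q \<in> mats_over E m m"
  shows "\<exists>U. U \<in> mats_over prime_subfield (m * s) (m * s) \<and> (\<forall>y\<in>A.Em. U *\<^sub>v A.psi y = B.psi (Q *\<^sub>v y))"
proof -
  define \<Theta> where "\<Theta> = (\<lambda>w. B.psi (Q *\<^sub>v A.psiinv w))"
  have into: "\<Theta> w \<in> A.V" if "w \<in> A.V" for w
    unfolding \<Theta>_def using B.psi_V A.Em_mult[OF Q] A.psiinv[OF that] by blast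
  have add: "\<Theta> (a + b) = \<Theta> a + \<Theta> b" if "a \<in> A.V" "b \<in> A.V" for a b
  proof -
    have "Q *\<^sub>v A.psiinv (a + b) = Q *\<^sub>v A.psiinv a + Q *\<^sub>v A.psiinv b"
      using A.psiinv_add[OF that] A.psiinv[OF that(1)] A.psiinv[OF that(2)] A.ME_carrier[OF Q]
        vecs_over_carrier by (metis mult_add_distrib_mat_vec)
    thus ?thesis unfolding \<Theta>_def
      using B.psi_add A.Em_mult[OF Q] A.psiinv[OF that(1)] A.psiinv[OF that(2)] by metis
  qed
  have hom: "\<Theta> (c \<cdot>\<^sub>v a) = c \<cdot>\<^sub>v \<Theta> a" if "c \<in> prime_subfield" "a \<in> A.V" for c a
  proof -
    have "Q *\<^sub>v A.psiinv (c \<cdot>\<^sub>v a) = c \<cdot>\<^sub>v (Q *\<^sub>v A.psiinv a)"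
      using A.psiinv_smult[OF that] A.psiinv[OF that(2)] A.ME_carrier[OF Q]
        vecs_over_carrier by (metis mult_mat_vec)
    thus ?thesis unfolding \<Theta>_def
      using B.psi_smult[OF that(1)] A.Em_mult[OF Q] A.psiinv[OF that(2)] by metis
  qed
  define U where "U = mat (m * s) (m * s) (\<lambda>(i,k). \<Theta> (unit_vec (m * s) k) $ i)"
  have Uw: "U *\<^sub>v w = \<Theta> w" if "w \<in> A.V" for w
    unfolding U_def
    by (rule linear_map_matrix[OF prime_subfield_0 prime_subfield_1 prime_subfield_add prime_subfield_mult
          into add hom that])
  have "U \<in> mats_over prime_subfield (m * s) (m * s)"
    unfolding U_def mats_over_def using into A.unit_vec_V unfolding vecs_over_def by auto
  moreover have "\<forall>y\<in>A.Em. U *\<^sub>v A.psi y = B.psi (Q *\<^sub>v y)"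
    using Uw A.psi_V A.psiinv_psi unfolding \<Theta>_def by simp
  ultimately show ?thesis by blast
qed

lemma psi_transport_intertwines:
  assumes Q: "Q \<in> mats_over E m m" "Qi \<in> mats_over E m m" "Qi * Q = 1\<^sub>m m"
    and U: "U \<in> mats_over prime_subfield (m * s) (m * s)" "\<forall>y\<in>A.Em. U *\<^sub>v A.psi y = B.psi (Q *\<^sub>v y)"
    and x: "x \<in> mats_over E m m"
  shows "U * \<iota> x = \<iota>' (Q * x * Qi) * U"
proof (rule A.mat_eq_on_psi)
  have Uc: "U \<in> carrier_mat (m * s) (m * s)" using U(1) mats_over_carrier by blast
  have QxQi: "Q * x * Qi \<in> mats_over E m m" using A.ME_mult Q x by blast
  show "U * \<iota> x \<in> carrier_mat (m * s) (m * s)" using Uc A.iota_carrier[OF x] by simp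
  show "\<iota>' (Q * x * Qi) * U \<in> carrier_mat (m * s) (m * s)" using Uc B.iota_carrier[OF QxQi] by simp
  fix y assume y: "y \<in> A.Em"
  have yc: "y \<in> carrier_vec m" using vecs_over_carrier[OF y] .
  have c: "Q \<in> carrier_mat m m" "Qi \<in> carrier_mat m m" "x \<in> carrier_mat m m"
    using Q x A.ME_carrier by auto
  have "(U * \<iota> x) *\<^sub>v A.psi y = U *\<^sub>v (\<iota> x *\<^sub>v A.psi y)"
    using Uc A.iota_carrier[OF x] A.psi_carrier[OF y] by simp
  also have "\<dots> = B.psi (Q *\<^sub>v (x *\<^sub>v y))" using A.psi_mult[OF x y] U(2) A.Em_mult[OF x y] by simp
  finally have l: "(U * \<iota> x) *\<^sub>v A.psi y = B.psi (Q *\<^sub>v (x *\<^sub>v y))" .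
  have "(\<iota>' (Q * x * Qi) * U) *\<^sub>v A.psi y = \<iota>' (Q * x * Qi) *\<^sub>v B.psi (Q *\<^sub>v y)"
    using Uc B.iota_carrier[OF QxQi] A.psi_carrier[OF y] U(2) y by simp
  also have "\<dots> = B.psi ((Q * x * Qi) *\<^sub>v (Q *\<^sub>v y))" using B.psi_mult[OF QxQi] A.Em_mult[OF Q(1) y] by simp
  also have "(Q * x * Qi) *\<^sub>v (Q *\<^sub>v y) = Q *\<^sub>v (x *\<^sub>v y)"
  proof -
    have "(Q * x * Qi) *\<^sub>v (Q *\<^sub>v y) = ((Q * x * Qi) * Q) *\<^sub>v y"
      by (rule assoc_mult_mat_vec[symmetric]) (use c yc in auto)
    also have "(Q * x * Qi) * Q = (Q * x) * (Qi * Q)"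
      by (rule assoc_mult_mat[of "Q * x" m m Qi m Q m]) (use c in auto)
    also have "\<dots> = Q * x" using Q(3) c by simp
    also have "(Q * x) *\<^sub>v y = Q *\<^sub>v (x *\<^sub>v y)" using c yc by simp
    finally show ?thesis .
  qed
  finally show "(U * \<iota> x) *\<^sub>v A.psi y = (\<iota>' (Q * x * Qi) * U) *\<^sub>v A.psi y" using l by simp
qed

lemma psi_transport_left_inverse:
  assumes Q: "Q \<in> mats_over E m m" "Qi \<in> mats_over E m m" "Qi * Q = 1\<^sub>m m"
    and U: "U \<in> carrier_mat (m * s) (m * s)" "\<forall>y\<in>A.Em. U *\<^sub>v A.psi y = B.psi (Q *\<^sub>v y)"
    and Ui: "Ui \<in> carrier_mat (m * s) (m * s)" "\<forall>y\<in>A.Em. Ui *\<^sub>v B.psi y = A.psi (Qi *\<^sub>v y)"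
  shows "Ui * U = 1\<^sub>m (m * s)"
proof (rule A.mat_eq_on_psi)
  fix y assume y: "y \<in> A.Em"
  have "Qi *\<^sub>v (Q *\<^sub>v y) = y"
    using Q mats_over_carrier[OF Q(1)] mats_over_carrier[OF Q(2)] vecs_over_carrier[OF y]
      assoc_mult_mat_vec[of Qi m m Q m y] by simp
  moreover have "(Ui * U) *\<^sub>v A.psi y = Ui *\<^sub>v (U *\<^sub>v A.psi y)" using U(1) Ui(1) A.psi_carrier[OF y] by simp
  ultimately show "(Ui * U) *\<^sub>v A.psi y = 1\<^sub>m (m * s) *\<^sub>v A.psi y"
    using U(2) Ui(2) y A.Em_mult[OF Q(1) y] A.psi_carrier[OF y] by simp
qed (use U Ui in auto)

end

lemma scalar_mat_vec: "(y::'a::field vec) \<in> carrier_vec m \<Longrightarrow> (c \<cdot>\<^sub>m 1\<^sub>m m) *\<^sub>v y = c \<cdot>\<^sub>v y"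
proof (rule eq_vecI)
  assume y: "y \<in> carrier_vec m"
  fix i assume "i < dim_vec (c \<cdot>\<^sub>v y)"
  hence i: "i < m" using y by simp
  have "((c \<cdot>\<^sub>m 1\<^sub>m m) *\<^sub>v y) $ i = (\<Sum>j\<in>{0..<m}. c * (if i = j then 1 else 0) * y $ j)"
    using i y by (simp add: scalar_prod_def row_def)
  also have "\<dots> = (\<Sum>j\<in>{i}. c * (if i = j then 1 else 0) * y $ j)"
    by (rule sum.mono_neutral_right) (use i in auto)
  finally show "((c \<cdot>\<^sub>m 1\<^sub>m m) *\<^sub>v y) $ i = (c \<cdot>\<^sub>v y) $ i" using i y by simp
qed auto

lemma commuting_mult_mat_vec:
  assumes "W \<in> carrier_mat n n" "A \<in> carrier_mat n n" "W * A = A * W" "v \<in> carrier_vec n"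
  shows "W *\<^sub>v (A *\<^sub>v v) = A *\<^sub>v (W *\<^sub>v v)"
  using assms by (metis assoc_mult_mat_vec)

context matrix_embedding
begin

lemma psi_scalar: "c \<in> E \<Longrightarrow> y \<in> Em \<Longrightarrow> psi (c \<cdot>\<^sub>v y) = \<iota> (c \<cdot>\<^sub>m 1\<^sub>m m) *\<^sub>v psi y"
  using psi_mult[OF ME_scalar] scalar_mat_vec vecs_over_carrier by metis

lemma E_linear_descends:
  assumes W: "W \<in> carrier_mat (m * s) (m * s)" "\<forall>w\<in>V. W *\<^sub>v w \<in> V"
    and WE: "\<forall>c\<in>E. W * \<iota> (c \<cdot>\<^sub>m 1\<^sub>m m) = \<iota> (c \<cdot>\<^sub>m 1\<^sub>m m) * W"
  obtains M where "M \<in> ME" "\<And>y. y \<in> Em \<Longrightarrow> W *\<^sub>v psi y = psi (M *\<^sub>v y)"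
proof -
  define \<Omega> where "\<Omega> = (\<lambda>y. psiinv (W *\<^sub>v psi y))"
  have O: "\<Omega> y \<in> Em" "psi (\<Omega> y) = W *\<^sub>v psi y" if "y \<in> Em" for y
    unfolding \<Omega>_def using psiinv W(2) psi_V that by auto
  have pinj: "a = b" if "a \<in> Em" "b \<in> Em" "psi a = psi b" for a b
    using inj_onD[OF psi_inj] that by blast
  have add: "\<Omega> (a + b) = \<Omega> a + \<Omega> b" if "a \<in> Em" "b \<in> Em" for a b
  proof (rule pinj)
    show "\<Omega> (a + b) \<in> Em" "\<Omega> a + \<Omega> b \<in> Em" using O Em_add that by blast+
    have "psi (\<Omega> (a + b)) = W *\<^sub>v (psi a + psi b)" using O(2) Em_add psi_add that by metis
    also have "\<dots> = W *\<^sub>v psi a + W *\<^sub>v psi b" using W(1) psi_carrier that by (simp add: mult_add_distrib_mat_vec)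
    also have "\<dots> = psi (\<Omega> a + \<Omega> b)" using O psi_add that by metis
    finally show "psi (\<Omega> (a + b)) = psi (\<Omega> a + \<Omega> b)" .
  qed
  have hom: "\<Omega> (c \<cdot>\<^sub>v a) = c \<cdot>\<^sub>v \<Omega> a" if "c \<in> E" "a \<in> Em" for c a
  proof (rule pinj)
    show "\<Omega> (c \<cdot>\<^sub>v a) \<in> Em" "c \<cdot>\<^sub>v \<Omega> a \<in> Em" using O Em_smult that by blast+
    have "psi (\<Omega> (c \<cdot>\<^sub>v a)) = W *\<^sub>v (\<iota> (c \<cdot>\<^sub>m 1\<^sub>m m) *\<^sub>v psi a)"
      using O(2) Em_smult psi_scalar that by metis
    also have "\<dots> = \<iota> (c \<cdot>\<^sub>m 1\<^sub>m m) *\<^sub>v (W *\<^sub>v psi a)"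
      using commuting_mult_mat_vec W(1) iota_carrier ME_scalar WE psi_carrier that by blast
    also have "\<dots> = psi (c \<cdot>\<^sub>v \<Omega> a)" using O psi_scalar that by metis
    finally show "psi (\<Omega> (c \<cdot>\<^sub>v a)) = psi (c \<cdot>\<^sub>v \<Omega> a)" .
  qed
  define M where "M = mat m m (\<lambda>(i,k). \<Omega> (unit_vec m k) $ i)"
  have "M *\<^sub>v y = \<Omega> y" if "y \<in> Em" for y
    unfolding M_def
    by (rule linear_map_matrix[OF E_zero E_one subfieldD(3)[OF sfE] subfieldD(4)[OF sfE]])
       (use O add hom that in auto)
  moreover have "M \<in> ME"
    using O(1)[OF unit_vec_in_vecs_over[OF E_zero E_one]] unfolding M_def mats_over_def vecs_over_def by auto
  ultimately show ?thesis using that O(2) by simp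
qed

lemma commutation_descends:
  assumes W: "W \<in> carrier_mat (m * s) (m * s)" and M: "M \<in> ME"
    and WM: "\<And>y. y \<in> Em \<Longrightarrow> W *\<^sub>v psi y = psi (M *\<^sub>v y)"
    and x: "x \<in> ME" "W * \<iota> x = \<iota> x * W"
  shows "M * x = x * M"
proof (rule mat_eq_on_vecs[OF _ _ E_zero E_one])
  have Mc: "M \<in> carrier_mat m m" and xc: "x \<in> carrier_mat m m" using M x ME_carrier by auto
  show "M * x \<in> carrier_mat m m" "x * M \<in> carrier_mat m m" using Mc xc by auto
  fix y assume y: "y \<in> Em"
  have yc: "y \<in> carrier_vec m" using vecs_over_carrier[OF y] .
  have xy: "x *\<^sub>v y \<in> Em" and My: "M *\<^sub>v y \<in> Em" using Em_mult x(1) M y by auto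
  have "psi ((M * x) *\<^sub>v y) = psi (M *\<^sub>v (x *\<^sub>v y))" using Mc xc yc by simp
  also have "\<dots> = W *\<^sub>v (\<iota> x *\<^sub>v psi y)" using WM[OF xy] psi_mult[OF x(1) y] by simp
  also have "\<dots> = \<iota> x *\<^sub>v (W *\<^sub>v psi y)"
    by (rule commuting_mult_mat_vec[OF W iota_carrier[OF x(1)] x(2) psi_carrier[OF y]])
  also have "\<dots> = psi (x *\<^sub>v (M *\<^sub>v y))" using WM[OF y] psi_mult[OF x(1) My] by simp
  also have "\<dots> = psi ((x * M) *\<^sub>v y)" using Mc xc yc by simp
  finally show "(M * x) *\<^sub>v y = (x * M) *\<^sub>v y"
    using inj_onD[OF psi_inj] Em_mult ME_mult M x(1) y by metis
qed

lemma commutant_is_scalar: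
  assumes W: "W \<in> carrier_mat (m * s) (m * s)" "\<forall>w\<in>V. W *\<^sub>v w \<in> V"
    and WE: "\<forall>c\<in>E. W * \<iota> (c \<cdot>\<^sub>m 1\<^sub>m m) = \<iota> (c \<cdot>\<^sub>m 1\<^sub>m m) * W"
    and XN: "\<forall>n\<in>N. X n \<in> ME" "\<forall>n\<in>N. W * \<iota> (X n) = \<iota> (X n) * W"
    and split: "\<forall>M\<in>carrier_mat m m. (\<forall>n\<in>N. M * X n = X n * M) \<longrightarrow> (\<exists>c. M = c \<cdot>\<^sub>m 1\<^sub>m m)"
  shows "\<exists>c\<in>E. W = \<iota> (c \<cdot>\<^sub>m 1\<^sub>m m)"
proof -
  obtain M where M: "M \<in> ME" and WM: "\<And>y. y \<in> Em \<Longrightarrow> W *\<^sub>v psi y = psi (M *\<^sub>v y)"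
    using E_linear_descends[OF W WE] by blast
  have "\<forall>n\<in>N. M * X n = X n * M" using commutation_descends[OF W(1) M WM] XN by blast
  then obtain c where c: "M = c \<cdot>\<^sub>m 1\<^sub>m m" using split M ME_carrier by blast
  have "M $$ (0, 0) \<in> E" using M mpos unfolding mats_over_def by blast
  hence cE: "c \<in> E" using c mpos by simp
  have "W = \<iota> (c \<cdot>\<^sub>m 1\<^sub>m m)"
  proof (rule mat_eq_on_psi[OF W(1) iota_carrier[OF ME_scalar[OF cE]]])
    fix y assume y: "y \<in> Em"
    have "W *\<^sub>v psi y = psi (c \<cdot>\<^sub>v y)" using WM[OF y] c scalar_mat_vec[OF vecs_over_carrier[OF y]] by simp
    thus "W *\<^sub>v psi y = \<iota> (c \<cdot>\<^sub>m 1\<^sub>m m) *\<^sub>v psi y" using psi_scalar cE y by simp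
  qed
  thus ?thesis using cE by blast
qed

end

section \<open>Descent of similarity to the subfield\<close>

locale trace_map =
  fixes E :: "'f::field set" and \<tau> :: "'f \<Rightarrow> 'f"
  assumes sfE: "subfield E" and tau_in: "\<And>z. \<tau> z \<in> E" and tau_add: "\<And>a b. \<tau> (a + b) = \<tau> a + \<tau> b"
    and tau_mult_right: "\<And>a e. e \<in> E \<Longrightarrow> \<tau> (a * e) = \<tau> a * e"
begin

lemma tau_zero: "\<tau> 0 = 0"
  using tau_add[of 0 0] by (metis add_cancel_right_right add_0)

lemma tau_sum: "\<tau> (sum f S) = (\<Sum>i\<in>S. \<tau> (f i))"
  by (induction S rule: infinite_finite_induct) (auto simp: tau_zero tau_add)

definition tau_mat :: "'f mat \<Rightarrow> 'f mat" where "tau_mat A = map_mat \<tau> A"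

lemma tau_mat_over: "tau_mat A \<in> mats_over E (dim_row A) (dim_col A)"
  unfolding tau_mat_def mats_over_def using tau_in by auto

lemma tau_mat_mult_right:
  assumes A: "A \<in> carrier_mat r k" and B: "B \<in> mats_over E k c"
  shows "tau_mat (A * B) = tau_mat A * B"
proof (rule eq_matI)
  have Bc: "B \<in> carrier_mat k c" using B mats_over_carrier by blast
  fix i j assume "i < dim_row (tau_mat A * B)" "j < dim_col (tau_mat A * B)"
  hence ij: "i < r" "j < c" using A Bc unfolding tau_mat_def by auto
  have "tau_mat (A * B) $$ (i, j) = \<tau> (\<Sum>l\<in>{0..<k}. A $$ (i, l) * B $$ (l, j))"
    unfolding tau_mat_def using A Bc ij by (simp add: scalar_prod_def)
  also have "\<dots> = (\<Sum>l\<in>{0..<k}. \<tau> (A $$ (i, l)) * B $$ (l, j))"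
    unfolding tau_sum using B ij unfolding mats_over_def by (auto intro!: sum.cong tau_mult_right)
  also have "\<dots> = (tau_mat A * B) $$ (i, j)"
    unfolding tau_mat_def using A Bc ij by (simp add: scalar_prod_def)
  finally show "tau_mat (A * B) $$ (i, j) = (tau_mat A * B) $$ (i, j)" .
qed (use assms mats_over_carrier in \<open>auto simp: tau_mat_def\<close>)

lemma tau_mat_mult_left:
  assumes B: "B \<in> mats_over E r k" and A: "A \<in> carrier_mat k c"
  shows "tau_mat (B * A) = B * tau_mat A"
proof (rule eq_matI)
  have Bc: "B \<in> carrier_mat r k" using B mats_over_carrier by blast
  fix i j assume "i < dim_row (B * tau_mat A)" "j < dim_col (B * tau_mat A)"
  hence ij: "i < r" "j < c" using A Bc unfolding tau_mat_def by auto
  have "tau_mat (B * A) $$ (i, j) = \<tau> (\<Sum>l\<in>{0..<k}. A $$ (l, j) * B $$ (i, l))"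
    unfolding tau_mat_def using A Bc ij by (simp add: scalar_prod_def mult.commute)
  also have "\<dots> = (\<Sum>l\<in>{0..<k}. B $$ (i, l) * \<tau> (A $$ (l, j)))"
    unfolding tau_sum using B ij unfolding mats_over_def by (auto intro!: sum.cong simp: tau_mult_right mult.commute)
  also have "\<dots> = (B * tau_mat A) $$ (i, j)"
    unfolding tau_mat_def using A Bc ij by (simp add: scalar_prod_def)
  finally show "tau_mat (B * A) $$ (i, j) = (B * tau_mat A) $$ (i, j)" .
qed (use assms mats_over_carrier in \<open>auto simp: tau_mat_def\<close>)

lemma intertwiner_over_E:
  assumes X: "\<forall>n\<in>N. X n \<in> mats_over E m m" and X': "\<forall>n\<in>N. X' n \<in> mats_over E m m"
    and P: "P \<in> carrier_mat m m" and int: "\<forall>n\<in>N. P * X n = X' n * P"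
    and w: "\<tau> w \<noteq> 0" and Pij: "i < m" "j < m" "P $$ (i, j) \<noteq> 0"
  shows "\<exists>Q. Q \<in> mats_over E m m \<and> Q \<noteq> 0\<^sub>m m m \<and> (\<forall>n\<in>N. Q * X n = X' n * Q)"
proof -
  define z where "z = w / P $$ (i, j)"
  define Q where "Q = tau_mat (z \<cdot>\<^sub>m P)"
  have "Q \<in> mats_over E m m" unfolding Q_def using tau_mat_over[of "z \<cdot>\<^sub>m P"] P by simp
  moreover have "Q \<noteq> 0\<^sub>m m m"
  proof
    assume "Q = 0\<^sub>m m m"
    hence "Q $$ (i, j) = 0" using Pij by simp
    moreover have "Q $$ (i, j) = \<tau> w" unfolding Q_def tau_mat_def z_def using P Pij by simp
    ultimately show False using w by simp
  qed
  moreover have "Q * X n = X' n * Q" if n: "n \<in> N" for n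
  proof -
    have Xc: "X n \<in> carrier_mat m m" "X' n \<in> carrier_mat m m"
      using X X' n mats_over_carrier by blast+
    have "Q * X n = tau_mat ((z \<cdot>\<^sub>m P) * X n)"
      unfolding Q_def using tau_mat_mult_right[of "z \<cdot>\<^sub>m P" m m "X n" m] P X n by simp
    also have "(z \<cdot>\<^sub>m P) * X n = z \<cdot>\<^sub>m (P * X n)" using mult_smult_assoc_mat P Xc by blast
    also have "\<dots> = z \<cdot>\<^sub>m (X' n * P)" using int n by simp
    also have "\<dots> = X' n * (z \<cdot>\<^sub>m P)" using mult_smult_distrib P Xc by metis
    also have "tau_mat (X' n * (z \<cdot>\<^sub>m P)) = X' n * Q"
      unfolding Q_def using tau_mat_mult_left[of "X' n" m m "z \<cdot>\<^sub>m P" m] P X' n by simp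
    finally show ?thesis .
  qed
  ultimately show ?thesis by blast
qed

end

lemma exists_trace_map:
  fixes K :: "'f::{field,finite} set"
  assumes K: "subfield K" and p: "prime p" "of_nat p = (0::'f)" and cK: "card K = p ^ s"
  obtains \<tau> w where "trace_map K \<tau>" "\<tau> w \<noteq> 0"
proof -
  have C: "CHAR('f) = p" using CHAR_eq_prime[OF p] .
  have pC: "prime CHAR('f)" using C p by simp
  define q where "q = card K"
  have qC: "q = CHAR('f) ^ s" using C cK q_def by simp
  have q_pos: "0 < q" using card_subfield_ge_2[OF K] unfolding q_def by simp
  have rootsK: "{z. z ^ q = z} = K" unfolding q_def using subfield_eq_roots[OF K] by simp
  have fixK: "e ^ (q ^ k) = e" if "e \<in> K" for e k
  proof (induction k)
    case (Suc k)
    have "e ^ (q ^ Suc k) = (e ^ (q ^ k)) ^ q" by (metis power_Suc2 power_mult)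
    thus ?case using Suc rootsK that by auto
  qed simp
  obtain N where N: "0 < N" "\<And>z::'f. z ^ (q ^ N) = z"
    and dist: "\<And>k l. k < l \<Longrightarrow> l < N \<Longrightarrow> \<exists>z::'f. z ^ (q ^ k) \<noteq> z ^ (q ^ l)"
    using frobenius_period[OF pC qC] by blast
  define \<tau> where "\<tau> = (\<lambda>z::'f. \<Sum>k<N. z ^ (q ^ k))"
  have "\<tau> (a + b) = \<tau> a + \<tau> b" for a b
    unfolding \<tau>_def by (simp add: frobenius_add[OF pC qC] sum.distrib)
  moreover have "\<tau> (a * e) = \<tau> a * e" if "e \<in> K" for a e
    unfolding \<tau>_def by (simp add: power_mult_distrib fixK[OF that] sum_distrib_right)
  moreover have "\<tau> z \<in> K" for z
  proof -
    have "\<tau> z ^ q = (\<Sum>k<N. (z ^ (q ^ k)) ^ q)"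
      unfolding \<tau>_def using frobenius_sum[OF pC qC, of _ _ 1] by simp
    also have "\<dots> = (\<Sum>k<N. z ^ (q ^ Suc k))"
      by (intro sum.cong refl) (metis power_Suc2 power_mult)
    also have "\<dots> = \<tau> z"
      unfolding \<tau>_def using sum.lessThan_Suc_shift[of "\<lambda>k. z ^ (q ^ k)" N] N(2) by simp
    finally show ?thesis using rootsK by auto
  qed
  moreover have "\<exists>w. \<tau> w \<noteq> 0"
    unfolding \<tau>_def by (rule sum_distinct_power_maps_nonzero[OF N(1) _ dist]) (use q_pos in simp)
  ultimately have "trace_map K \<tau>" "\<exists>w. \<tau> w \<noteq> 0" using K by (auto intro: trace_map.intro)
  thus ?thesis using that by blast
qed

lemma nonzero_entry: "P \<in> carrier_mat m m \<Longrightarrow> P \<noteq> 0\<^sub>m m m \<Longrightarrow> \<exists>i j. i < m \<and> j < m \<and> P $$ (i, j) \<noteq> 0"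
  by (metis eq_matI carrier_matD index_zero_mat(1) index_zero_mat(2) index_zero_mat(3))

lemma right_inverse_imp_nonzero:
  fixes P :: "'a::field mat"
  shows "P \<in> carrier_mat m m \<Longrightarrow> Pinv \<in> carrier_mat m m \<Longrightarrow> P * Pinv = 1\<^sub>m m \<Longrightarrow> 0 < m \<Longrightarrow> P \<noteq> 0\<^sub>m m m"
proof
  assume "P \<in> carrier_mat m m" "Pinv \<in> carrier_mat m m" "P * Pinv = 1\<^sub>m m" "0 < m" "P = 0\<^sub>m m m"
  hence "1\<^sub>m m = (0\<^sub>m m m :: 'a mat)" by simp
  hence "(1\<^sub>m m :: 'a mat) $$ (0, 0) = 0" using \<open>0 < m\<close> by (metis index_zero_mat(1))
  thus False using \<open>0 < m\<close> by simp
qed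

lemma smult_smult_mat: "a \<cdot>\<^sub>m (b \<cdot>\<^sub>m A) = (a * b :: 'a::comm_ring) \<cdot>\<^sub>m A"
  by (rule eq_matI) (auto simp: mult.assoc)

lemma smult_prod_mat:
  assumes "A \<in> carrier_mat m m" "B \<in> carrier_mat m m"
  shows "(a \<cdot>\<^sub>m A) * (b \<cdot>\<^sub>m B) = (a * b :: 'a::comm_ring) \<cdot>\<^sub>m (A * B)"
proof -
  have "(a \<cdot>\<^sub>m A) * (b \<cdot>\<^sub>m B) = a \<cdot>\<^sub>m (A * (b \<cdot>\<^sub>m B))"
    by (rule mult_smult_assoc_mat) (use assms in auto)
  also have "A * (b \<cdot>\<^sub>m B) = b \<cdot>\<^sub>m (A * B)" by (rule mult_smult_distrib) (use assms in auto)
  finally show ?thesis by (simp add: smult_smult_mat)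
qed

lemma inverse_smult_scalar_mat: "(d::'a::field) \<noteq> 0 \<Longrightarrow> inverse d \<cdot>\<^sub>m (d \<cdot>\<^sub>m 1\<^sub>m m) = 1\<^sub>m m"
  by (simp add: smult_smult_mat, intro eq_matI, auto)

lemma similar_intertwines:
  fixes P :: "'a::semiring_1 mat"
  assumes P: "P \<in> carrier_mat m m" "Pinv \<in> carrier_mat m m" "P * Pinv = 1\<^sub>m m" "Pinv * P = 1\<^sub>m m"
    and Xc: "X \<in> carrier_mat m m" and X': "X' = P * X * Pinv"
  shows "P * X = X' * P" "Pinv * X' = X * Pinv"
proof -
  have "X' * P = P * X * (Pinv * P)" using X' P Xc by (simp add: assoc_mult_mat[of _ m m _ m _ m])
  thus "P * X = X' * P" using P(4) right_mult_one_mat[OF mult_carrier_mat[OF P(1) Xc]] by simp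
  have "Pinv * X' = (Pinv * P) * (X * Pinv)" using X' P(1,2) Xc by (simp add: assoc_mult_mat[of _ m m _ m _ m])
  thus "Pinv * X' = X * Pinv" using P(4) left_mult_one_mat[OF mult_carrier_mat[OF Xc P(2)]] by simp
qed

lemma intertwiner_product_scalar:
  assumes split: "\<forall>M\<in>carrier_mat m m. (\<forall>n\<in>N. M * X n = X n * M) \<longrightarrow> (\<exists>c. M = c \<cdot>\<^sub>m 1\<^sub>m m)"
    and Xc: "\<forall>n\<in>N. X n \<in> carrier_mat m m \<and> X' n \<in> carrier_mat m m"
    and A: "A \<in> carrier_mat m m" "\<forall>n\<in>N. A * X' n = X n * A"
    and B: "B \<in> carrier_mat m m" "\<forall>n\<in>N. B * X n = X' n * B"
  obtains c where "A * B = c \<cdot>\<^sub>m 1\<^sub>m m"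
proof -
  have "(A * B) * X n = X n * (A * B)" if n: "n \<in> N" for n
  proof -
    have c: "X n \<in> carrier_mat m m" "X' n \<in> carrier_mat m m" using Xc n by auto
    have "(A * B) * X n = A * (B * X n)" using A B c by (simp add: assoc_mult_mat[of _ m m _ m _ m])
    also have "\<dots> = (A * X' n) * B" using B n A(1) c by (simp add: assoc_mult_mat[of _ m m _ m _ m])
    also have "\<dots> = (X n * A) * B" using A(2) n by simp
    also have "\<dots> = X n * (A * B)" using A B c by (simp add: assoc_mult_mat[of _ m m _ m _ m])
    finally show ?thesis .
  qed
  thus ?thesis using split A B that by (meson mult_carrier_mat)
qed

lemma inverse_over_subfield_of_scalar_multiples:
  assumes sfE: "subfield E" and mpos: "0 < m"
    and P: "P \<in> carrier_mat m m" "Pinv \<in> carrier_mat m m" "P * Pinv = 1\<^sub>m m" "Pinv * P = 1\<^sub>m m"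
    and Q: "Q \<in> mats_over E m m" "Q \<noteq> 0\<^sub>m m m" "Q = c \<cdot>\<^sub>m P"
    and Q': "Q' \<in> mats_over E m m" "Q' \<noteq> 0\<^sub>m m m" "Q' = c' \<cdot>\<^sub>m Pinv"
  obtains Qi where "Qi \<in> mats_over E m m" "Q * Qi = 1\<^sub>m m" "Qi * Q = 1\<^sub>m m"
proof -
  define d where "d = c' * c"
  have nz: "d \<noteq> 0" unfolding d_def using Q Q' P by auto
  have Qc: "Q \<in> carrier_mat m m" "Q' \<in> carrier_mat m m" using Q(1) Q'(1) mats_over_carrier by blast+
  have Q'Q: "Q' * Q = d \<cdot>\<^sub>m 1\<^sub>m m" and QQ': "Q * Q' = d \<cdot>\<^sub>m 1\<^sub>m m"
    unfolding d_def Q(3) Q'(3) using P by (simp_all add: smult_prod_mat mult.commute)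
  have "Q' * Q \<in> mats_over E m m"
    by (rule mats_over_mult[OF _ _ _ Q'(1) Q(1)]) (use subfieldD[OF sfE] in auto)
  hence "(Q' * Q) $$ (0, 0) \<in> E" using mpos unfolding mats_over_def by blast
  hence "inverse d \<in> E" using Q'Q mpos subfieldD(6)[OF sfE] by simp
  hence "inverse d \<cdot>\<^sub>m Q' \<in> mats_over E m m"
    using Q'(1) subfieldD(4)[OF sfE] unfolding mats_over_def by auto
  moreover have "Q * (inverse d \<cdot>\<^sub>m Q') = 1\<^sub>m m"
    using mult_smult_distrib[OF Qc] QQ' inverse_smult_scalar_mat[OF nz] by simp
  moreover have "(inverse d \<cdot>\<^sub>m Q') * Q = 1\<^sub>m m"
    using mult_smult_assoc_mat[OF Qc(2,1)] Q'Q inverse_smult_scalar_mat[OF nz] by simp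
  ultimately show ?thesis using that by blast
qed

text \<open>Representations over \<open>E\<close> that are similar over the big field are already similar over \<open>E\<close>:
  applying a trace map to suitable multiples of \<open>P\<close> and \<open>P\<^sup>-\<^sup>1\<close> gives nonzero intertwiners over \<open>E\<close>,
  and by Schur these are scalar multiples of \<open>P\<close> and \<open>P\<^sup>-\<^sup>1\<close>.\<close>

lemma similarity_descends_to_subfield:
  fixes X X' :: "'g \<Rightarrow> 'f::field mat"
  assumes tm: "trace_map E \<tau>" and w: "\<tau> w \<noteq> 0" and mpos: "0 < m"
    and X: "\<forall>n\<in>N. X n \<in> mats_over E m m" and X': "\<forall>n\<in>N. X' n \<in> mats_over E m m"
    and P: "P \<in> carrier_mat m m" "Pinv \<in> carrier_mat m m" "P * Pinv = 1\<^sub>m m" "Pinv * P = 1\<^sub>m m"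
    and XX': "\<forall>n\<in>N. X' n = P * X n * Pinv"
    and split: "\<forall>M\<in>carrier_mat m m. (\<forall>n\<in>N. M * X n = X n * M) \<longrightarrow> (\<exists>c. M = c \<cdot>\<^sub>m 1\<^sub>m m)"
  shows "\<exists>Q Qi. Q \<in> mats_over E m m \<and> Qi \<in> mats_over E m m \<and> Q * Qi = 1\<^sub>m m \<and> Qi * Q = 1\<^sub>m m \<and>
     (\<forall>n\<in>N. Q * X n * Qi = X' n)"
proof -
  interpret trace_map E \<tau> by (rule tm)
  have Xc: "\<forall>n\<in>N. X n \<in> carrier_mat m m \<and> X' n \<in> carrier_mat m m"
    using X X' mats_over_carrier by blast
  have int: "\<forall>n\<in>N. P * X n = X' n * P" "\<forall>n\<in>N. Pinv * X' n = X n * Pinv"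
    using similar_intertwines[OF P] Xc XX' by blast+
  obtain i j where "i < m" "j < m" "P $$ (i, j) \<noteq> 0"
    using nonzero_entry[OF P(1) right_inverse_imp_nonzero[OF P(1,2,3) mpos]] by blast
  then obtain Q where Q: "Q \<in> mats_over E m m" "Q \<noteq> 0\<^sub>m m m" "\<forall>n\<in>N. Q * X n = X' n * Q"
    using intertwiner_over_E[OF X X' P(1) int(1) w] by blast
  obtain i' j' where "i' < m" "j' < m" "Pinv $$ (i', j') \<noteq> 0"
    using nonzero_entry[OF P(2) right_inverse_imp_nonzero[OF P(2,1,4) mpos]] by blast
  then obtain Q' where Q': "Q' \<in> mats_over E m m" "Q' \<noteq> 0\<^sub>m m m" "\<forall>n\<in>N. Q' * X' n = X n * Q'"
    using intertwiner_over_E[OF X' X P(2) int(2) w] by blast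
  have Qc: "Q \<in> carrier_mat m m" "Q' \<in> carrier_mat m m" using Q(1) Q'(1) mats_over_carrier by blast+
  obtain c where c: "Pinv * Q = c \<cdot>\<^sub>m 1\<^sub>m m"
    using intertwiner_product_scalar[OF split Xc P(2) int(2) Qc(1) Q(3)] by blast
  have "Q = P * (Pinv * Q)" using P Qc by (simp add: assoc_mult_mat[symmetric, of _ m m _ m _ m])
  hence Qe: "Q = c \<cdot>\<^sub>m P" using c P mult_smult_distrib[of P m m "1\<^sub>m m" m c] by simp
  obtain c' where c': "Q' * P = c' \<cdot>\<^sub>m 1\<^sub>m m"
    using intertwiner_product_scalar[OF split Xc Qc(2) Q'(3) P(1) int(1)] by blast
  have "Q' = (Q' * P) * Pinv" using P Qc by (simp add: assoc_mult_mat[of _ m m _ m _ m])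
  hence Q'e: "Q' = c' \<cdot>\<^sub>m Pinv" using c' P mult_smult_assoc_mat[of "1\<^sub>m m" m m Pinv m c'] by simp
  obtain Qi where Qi: "Qi \<in> mats_over E m m" "Q * Qi = 1\<^sub>m m" "Qi * Q = 1\<^sub>m m"
    using inverse_over_subfield_of_scalar_multiples[OF sfE mpos P Q(1,2) Qe Q'(1,2) Q'e] by blast
  have "Q * X n * Qi = X' n" if n: "n \<in> N" for n
  proof -
    have "Q * X n * Qi = X' n * (Q * Qi)"
      using Q(3) n Qc Xc mats_over_carrier[OF Qi(1)] by (simp add: assoc_mult_mat[of _ m m _ m _ m])
    moreover have "X' n \<in> carrier_mat m m" using Xc n by blast
    ultimately show ?thesis using Qi(2) by simp
  qed
  thus ?thesis using Q(1) Qi by blast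
qed

lemma rep_equiv_over_subfield:
  fixes X X' :: "'g \<Rightarrow> 'f::{field,finite} mat"
  assumes sfE: "subfield E" and p: "prime p" "of_nat p = (0::'f)" "card E = p ^ s" and mpos: "0 < m"
    and X: "\<forall>n\<in>N. X n \<in> mats_over E m m" and X': "\<forall>n\<in>N. X' n \<in> mats_over E m m"
    and equiv: "rep_equiv (G\<lparr>carrier := N\<rparr>) m X X'"
    and split: "\<forall>M\<in>carrier_mat m m. (\<forall>n\<in>N. M * X n = X n * M) \<longrightarrow> (\<exists>c. M = c \<cdot>\<^sub>m 1\<^sub>m m)"
  obtains Q Qi where "Q \<in> mats_over E m m" "Qi \<in> mats_over E m m" "Q * Qi = 1\<^sub>m m" "Qi * Q = 1\<^sub>m m"
    "\<forall>n\<in>N. Q * X n * Qi = X' n"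
proof -
  obtain \<tau> w where tr: "trace_map E \<tau>" "\<tau> w \<noteq> 0" using exists_trace_map[OF sfE p] by blast
  obtain P Pinv where P: "P \<in> carrier_mat m m" "Pinv \<in> carrier_mat m m" "P * Pinv = 1\<^sub>m m"
      "Pinv * P = 1\<^sub>m m" "\<forall>n\<in>N. X' n = P * X n * Pinv"
    using equiv unfolding rep_equiv_def by auto
  show ?thesis using similarity_descends_to_subfield[OF tr mpos X X' P split] that by blast
qed

section \<open>Semilinear lifts and their transport\<close>

lemma invertible_mat_obtain_inverse:
  assumes "A \<in> carrier_mat n n" "invertible_mat A"
  obtains B where "B \<in> carrier_mat n n" "A * B = 1\<^sub>m n" "B * A = 1\<^sub>m n"
proof -
  obtain B where B: "A * B = 1\<^sub>m (dim_row A)" "B * A = 1\<^sub>m (dim_row B)"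
    using assms(2) unfolding invertible_mat_def inverts_mat_def by blast
  have r: "dim_row A = n" "dim_col A = n" using assms(1) by auto
  have "dim_col B = n" using arg_cong[OF B(1), of dim_col] r by simp
  moreover have "dim_row B = n" using arg_cong[OF B(2), of dim_col] r by simp
  ultimately show ?thesis using B r that by (auto intro!: carrier_matI)
qed

lemma mult_inverse_swap:
  fixes A B Y Yi :: "'a::semiring_1 mat"
  assumes c: "A \<in> carrier_mat n n" "B \<in> carrier_mat n n" "Y \<in> carrier_mat n n" "Yi \<in> carrier_mat n n"
    and inv: "Y * Yi = 1\<^sub>m n" "Yi * Y = 1\<^sub>m n" and AY: "A * Y = Y * B"
  shows "Yi * A = B * Yi"
proof -
  have "Yi * A = Yi * (A * Y) * Yi" using c inv(1) by (simp add: assoc_mult_mat[of _ n n _ n _ n])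
  also have "\<dots> = (Yi * Y) * B * Yi" unfolding AY using c by (simp add: assoc_mult_mat[of _ n n _ n _ n])
  also have "\<dots> = B * Yi" using inv(2) c by simp
  finally show ?thesis .
qed

lemma inverse_mult_commute:
  fixes Y Y' Yi :: "'a::semiring_1 mat"
  assumes c: "A \<in> carrier_mat n n" "B \<in> carrier_mat n n" "Y \<in> carrier_mat n n" "Y' \<in> carrier_mat n n"
      "Yi \<in> carrier_mat n n"
    and inv: "Y * Yi = 1\<^sub>m n" "Yi * Y = 1\<^sub>m n" and AB: "A * Y = Y * B" "A * Y' = Y' * B"
  shows "(Yi * Y') * B = B * (Yi * Y')"
proof -
  have "(Yi * Y') * B = (Yi * A) * Y'" using AB(2) c by (simp add: assoc_mult_mat[of _ n n _ n _ n])
  also have "Yi * A = B * Yi" by (rule mult_inverse_swap[OF c(1,2,3,5) inv AB(1)])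
  finally show ?thesis using c by (simp add: assoc_mult_mat[of _ n n _ n _ n])
qed

lemma scalar_mat_conjugate:
  fixes Q Qi :: "'a::comm_ring_1 mat"
  assumes "Q \<in> carrier_mat m m" "Qi \<in> carrier_mat m m" "Q * Qi = 1\<^sub>m m"
  shows "Q * (d \<cdot>\<^sub>m 1\<^sub>m m) * Qi = d \<cdot>\<^sub>m 1\<^sub>m m"
  using assms mult_smult_distrib[of Q m m "1\<^sub>m m" m d] mult_smult_assoc_mat[of Q m m Qi m d] by simp

lemma (in matrix_embedding) V_finite: "finite V"
proof -
  have "card (prime_subfield :: 'f set) > 0" using prime_subfield_0 by (auto simp: card_gt_0_iff)
  hence "card V > 0" using card_vecs_over[of "prime_subfield :: 'f set" "m * s"] by simp
  thus "finite V" using card_gt_0_iff by blast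
qed

lemma (in matrix_embedding) inverse_maps_V:
  assumes A: "A \<in> mats_over prime_subfield (m * s) (m * s)" and B: "B \<in> carrier_mat (m * s) (m * s)"
    and AB: "B * A = 1\<^sub>m (m * s)" and w: "w \<in> V"
  shows "B *\<^sub>v w \<in> V"
proof -
  have Ac: "A \<in> carrier_mat (m * s) (m * s)" using A mats_over_carrier by blast
  have inj: "inj_on (\<lambda>u. A *\<^sub>v u) V"
  proof
    fix u u' assume uu: "u \<in> V" "u' \<in> V" "A *\<^sub>v u = A *\<^sub>v u'"
    have "u = (B * A) *\<^sub>v u" using AB vecs_over_carrier[OF uu(1)] by simp
    also have "\<dots> = B *\<^sub>v (A *\<^sub>v u')" using Ac B vecs_over_carrier[OF uu(1)] uu(3) by simp
    also have "\<dots> = (B * A) *\<^sub>v u'" using Ac B vecs_over_carrier[OF uu(2)] by simp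
    also have "\<dots> = u'" using AB vecs_over_carrier[OF uu(2)] by simp
    finally show "u = u'" .
  qed
  have "(\<lambda>u. A *\<^sub>v u) ` V = V"
    using card_image[OF inj] V_finite V_mult[OF A] by (intro card_subset_eq) auto
  then obtain u where u: "u \<in> V" "w = A *\<^sub>v u" using w by force
  have "B *\<^sub>v w = (B * A) *\<^sub>v u" using u Ac B vecs_over_carrier[OF u(1)] by simp
  also have "\<dots> = u" using AB vecs_over_carrier[OF u(1)] by simp
  finally show ?thesis using u by simp
qed

lemma semilinear_scalar_mat:
  assumes sig: "field_aut E \<sigma>" and sfE: "subfield E" and d: "d \<in> E"
    and T: "T \<in> carrier_mat m m" "Ti \<in> carrier_mat m m" "Ti * T = 1\<^sub>m m"
  shows "Ti * map_mat \<sigma> (d \<cdot>\<^sub>m 1\<^sub>m m) * T = \<sigma> d \<cdot>\<^sub>m 1\<^sub>m m"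
proof -
  have "\<sigma> (0 + 0) = \<sigma> 0 + \<sigma> 0" using sig subfieldD(1)[OF sfE] unfolding field_aut_def by blast
  hence "\<sigma> 0 = 0" by (metis add_cancel_right_right add_0)
  hence "map_mat \<sigma> (d \<cdot>\<^sub>m 1\<^sub>m m) = \<sigma> d \<cdot>\<^sub>m 1\<^sub>m m" by (intro eq_matI) auto
  thus ?thesis using scalar_mat_conjugate[OF T(2,1,3)] by simp
qed

text \<open>The part of \<open>Y_function\<close> that the factor set depends on: \<open>Y\<close> extends \<open>\<iota> \<circ> X\<close> compatibly
  with \<open>N\<close> and conjugation by \<open>Y g\<close> acts on \<open>\<iota>(E)\<close> as \<open>\<sigma>\<^sub>g\<close>.\<close>

definition semilinear_lift :: "('g, 'b) monoid_scheme \<Rightarrow> 'g set \<Rightarrow> 'f::field set \<Rightarrow> nat \<Rightarrow> nat \<Rightarrow>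
    ('g \<Rightarrow> 'f \<Rightarrow> 'f) \<Rightarrow> ('g \<Rightarrow> 'f mat) \<Rightarrow> ('f mat \<Rightarrow> 'f mat) \<Rightarrow> ('g \<Rightarrow> 'f mat) \<Rightarrow> bool" where
  "semilinear_lift G N E m s sig X \<iota> Y \<longleftrightarrow>
     (\<forall>g\<in>carrier G. Y g \<in> mats_over prime_subfield (m * s) (m * s) \<and> invertible_mat (Y g)) \<and>
     (\<forall>g\<in>carrier G. sig g ` E = E) \<and>
     (\<forall>g\<in>carrier G. \<forall>d\<in>E. \<iota> (d \<cdot>\<^sub>m 1\<^sub>m m) * Y g = Y g * \<iota> (sig g d \<cdot>\<^sub>m 1\<^sub>m m)) \<and>
     (\<forall>n\<in>N. Y n = \<iota> (X n)) \<and>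
     (\<forall>g\<in>carrier G. \<forall>n\<in>N. Y (g \<otimes>\<^bsub>G\<^esub> n) = Y g * Y n \<and> Y (n \<otimes>\<^bsub>G\<^esub> g) = Y n * Y g)"

lemma semilinear_liftD:
  assumes "semilinear_lift G N E m s sig X \<iota> Y"
  shows "g \<in> carrier G \<Longrightarrow> Y g \<in> mats_over prime_subfield (m * s) (m * s)"
    and "g \<in> carrier G \<Longrightarrow> invertible_mat (Y g)"
    and "g \<in> carrier G \<Longrightarrow> sig g ` E = E"
    and "g \<in> carrier G \<Longrightarrow> d \<in> E \<Longrightarrow> \<iota> (d \<cdot>\<^sub>m 1\<^sub>m m) * Y g = Y g * \<iota> (sig g d \<cdot>\<^sub>m 1\<^sub>m m)"
    and "n \<in> N \<Longrightarrow> Y n = \<iota> (X n)"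
    and "g \<in> carrier G \<Longrightarrow> n \<in> N \<Longrightarrow> Y (g \<otimes>\<^bsub>G\<^esub> n) = Y g * Y n"
    and "g \<in> carrier G \<Longrightarrow> n \<in> N \<Longrightarrow> Y (n \<otimes>\<^bsub>G\<^esub> g) = Y n * Y g"
  using assms unfolding semilinear_lift_def by blast+

lemma Y_function_semilinear_lift:
  assumes emb: "matrix_embedding E m s p \<iota>" and Y: "Y_function G N E m s sig X \<iota> Y"
    and sig: "\<forall>g\<in>carrier G. field_aut E (sig g)"
  shows "semilinear_lift G N E m s sig X \<iota> Y"
proof -
  interpret matrix_embedding E m s p \<iota> by (rule emb)
  have "\<iota> (d \<cdot>\<^sub>m 1\<^sub>m m) * Y g = Y g * \<iota> (sig g d \<cdot>\<^sub>m 1\<^sub>m m)" if g: "g \<in> carrier G" and d: "d \<in> E" for g d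
  proof -
    obtain T Ti where T: "T \<in> ME" "Ti \<in> ME" "Ti * T = 1\<^sub>m m"
      "\<forall>x\<in>ME. \<iota> x * Y g = Y g * \<iota> (Ti * map_mat (sig g) x * T)"
      using Y g unfolding Y_function_def by meson
    have "Ti * map_mat (sig g) (d \<cdot>\<^sub>m 1\<^sub>m m) * T = sig g d \<cdot>\<^sub>m 1\<^sub>m m"
      using semilinear_scalar_mat[of E "sig g" d T m Ti] sig g sfE d T mats_over_carrier by blast
    thus ?thesis using T(4) ME_scalar[OF d] by simp
  qed
  moreover have "\<forall>g\<in>carrier G. sig g ` E = E"
    using sig unfolding field_aut_def by (auto simp: bij_betw_def)
  ultimately show ?thesis using Y unfolding Y_function_def semilinear_lift_def by blast
qed

lemma conjugate_mult:
  fixes U Ui :: "'a::semiring_1 mat"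
  assumes "A \<in> carrier_mat n n" "B \<in> carrier_mat n n" "U \<in> carrier_mat n n" "Ui \<in> carrier_mat n n"
    and "U * Ui = 1\<^sub>m n"
  shows "(Ui * A * U) * (Ui * B * U) = Ui * (A * B) * U"
proof -
  have "U * (Ui * (B * U)) = (U * Ui) * (B * U)"
    by (rule assoc_mult_mat[symmetric]) (use assms in auto)
  hence "U * (Ui * (B * U)) = B * U" using assms by simp
  thus ?thesis using assms by (simp add: assoc_mult_mat[of _ n n _ n _ n])
qed

lemma invertible_mat_conjugate:
  fixes U Ui :: "'a::semiring_1 mat"
  assumes A: "A \<in> carrier_mat n n" "invertible_mat A"
    and U: "U \<in> carrier_mat n n" "Ui \<in> carrier_mat n n" "U * Ui = 1\<^sub>m n" "Ui * U = 1\<^sub>m n"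
  shows "invertible_mat (Ui * A * U)"
proof -
  obtain B where B: "B \<in> carrier_mat n n" "A * B = 1\<^sub>m n" "B * A = 1\<^sub>m n"
    using invertible_mat_obtain_inverse[OF A] .
  have "(Ui * A * U) * (Ui * B * U) = 1\<^sub>m n" "(Ui * B * U) * (Ui * A * U) = 1\<^sub>m n"
    using conjugate_mult[OF A(1) B(1) U(1-3)] conjugate_mult[OF B(1) A(1) U(1-3)] B U by simp_all
  moreover have "Ui * A * U \<in> carrier_mat n n" "Ui * B * U \<in> carrier_mat n n" using A(1) B(1) U by auto
  ultimately show ?thesis unfolding invertible_mat_def inverts_mat_def
    using U(1,2) by (intro conjI exI[of _ "Ui * B * U"]) (auto simp: square_mat.simps)
qed

locale embedding_transport = embedding_pair E m s p \<iota> \<iota>'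
  for E :: "'f::{field,finite} set" and m s p \<iota> \<iota>' +
  fixes Q Qi U Ui :: "'f mat"
  assumes Q: "Q \<in> mats_over E m m" "Qi \<in> mats_over E m m" "Q * Qi = 1\<^sub>m m"
    and U: "U \<in> mats_over prime_subfield (m * s) (m * s)" "Ui \<in> mats_over prime_subfield (m * s) (m * s)"
      "U * Ui = 1\<^sub>m (m * s)" "Ui * U = 1\<^sub>m (m * s)"
      "\<forall>x\<in>mats_over E m m. Ui * \<iota>' (Q * x * Qi) * U = \<iota> x"
begin

lemma U_carrier: "U \<in> carrier_mat (m * s) (m * s)" "Ui \<in> carrier_mat (m * s) (m * s)"
  using U(1,2) mats_over_carrier by blast+

lemma conjugate_iota_scalar: "d \<in> E \<Longrightarrow> Ui * \<iota>' (d \<cdot>\<^sub>m 1\<^sub>m m) * U = \<iota> (d \<cdot>\<^sub>m 1\<^sub>m m)"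
  using bspec[OF U(5) A.ME_scalar] scalar_mat_conjugate[OF mats_over_carrier[OF Q(1)]
      mats_over_carrier[OF Q(2)] Q(3)] by simp

lemma conjugate_factor_set:
  assumes "A \<in> carrier_mat (m * s) (m * s)" "B \<in> carrier_mat (m * s) (m * s)"
    "D \<in> carrier_mat (m * s) (m * s)" "a \<in> E" "A * B = D * \<iota>' (a \<cdot>\<^sub>m 1\<^sub>m m)"
  shows "(Ui * A * U) * (Ui * B * U) = (Ui * D * U) * \<iota> (a \<cdot>\<^sub>m 1\<^sub>m m)"
  unfolding conjugate_iota_scalar[OF assms(4), symmetric] conjugate_mult[OF assms(1,2) U_carrier U(3)]
    conjugate_mult[OF assms(3) B.iota_carrier[OF B.ME_scalar[OF assms(4)]] U_carrier U(3)] assms(5) ..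

text \<open>This reduces the comparison of two choices of \<open>(X, \<iota>, Y)\<close> to the case \<open>X' = X\<close>, \<open>\<iota>' = \<iota>\<close>.\<close>

lemma semilinear_lift_conjugate:
  assumes lift: "semilinear_lift G N E m s sig X' \<iota>' Y'"
    and X: "\<forall>n\<in>N. X n \<in> mats_over E m m" and N: "N \<subseteq> carrier G"
    and XX': "\<forall>n\<in>N. Q * X n * Qi = X' n"
  shows "semilinear_lift G N E m s sig X \<iota> (\<lambda>g. Ui * Y' g * U)"
proof -
  have Y'c: "Y' g \<in> carrier_mat (m * s) (m * s)" if "g \<in> carrier G" for g
    using semilinear_liftD(1)[OF lift that] mats_over_carrier by blast
  have sc: "\<iota>' (d \<cdot>\<^sub>m 1\<^sub>m m) \<in> carrier_mat (m * s) (m * s)" if "d \<in> E" for d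
    using B.iota_carrier[OF B.ME_scalar[OF that]] .
  note conj_mult = conjugate_mult[OF _ _ U_carrier U(3)]
  have "Ui * Y' g * U \<in> mats_over prime_subfield (m * s) (m * s) \<and> invertible_mat (Ui * Y' g * U)"
    if g: "g \<in> carrier G" for g
    using A.prime_subfield_mats_mult[OF A.prime_subfield_mats_mult[OF U(2) semilinear_liftD(1)[OF lift g]] U(1)]
      invertible_mat_conjugate[OF Y'c[OF g] semilinear_liftD(2)[OF lift g] U_carrier U(3,4)] by blast
  moreover have "\<iota> (d \<cdot>\<^sub>m 1\<^sub>m m) * (Ui * Y' g * U) = (Ui * Y' g * U) * \<iota> (sig g d \<cdot>\<^sub>m 1\<^sub>m m)"
    if g: "g \<in> carrier G" and d: "d \<in> E" for g d
  proof -
    have sd: "sig g d \<in> E" using semilinear_liftD(3)[OF lift g] d by blast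
    have "\<iota> (d \<cdot>\<^sub>m 1\<^sub>m m) * (Ui * Y' g * U) = Ui * (\<iota>' (d \<cdot>\<^sub>m 1\<^sub>m m) * Y' g) * U"
      unfolding conjugate_iota_scalar[OF d, symmetric] by (rule conj_mult[OF sc[OF d] Y'c[OF g]])
    also have "\<dots> = (Ui * Y' g * U) * \<iota> (sig g d \<cdot>\<^sub>m 1\<^sub>m m)"
      unfolding semilinear_liftD(4)[OF lift g d] conjugate_iota_scalar[OF sd, symmetric]
      by (rule conj_mult[symmetric, OF Y'c[OF g] sc[OF sd]])
    finally show ?thesis .
  qed
  moreover have "Ui * Y' n * U = \<iota> (X n)" if n: "n \<in> N" for n
  proof -
    have "Y' n = \<iota>' (Q * X n * Qi)" using semilinear_liftD(5)[OF lift n] XX' n by simp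
    thus ?thesis using U(5) X n by simp
  qed
  moreover have "Ui * Y' (g \<otimes>\<^bsub>G\<^esub> n) * U = (Ui * Y' g * U) * (Ui * Y' n * U) \<and>
      Ui * Y' (n \<otimes>\<^bsub>G\<^esub> g) * U = (Ui * Y' n * U) * (Ui * Y' g * U)" if g: "g \<in> carrier G" and n: "n \<in> N" for g n
  proof -
    have nG: "n \<in> carrier G" using N n by blast
    show ?thesis using semilinear_liftD(6,7)[OF lift g n] conj_mult[OF Y'c[OF g] Y'c[OF nG]]
        conj_mult[OF Y'c[OF nG] Y'c[OF g]] by simp
  qed
  ultimately show ?thesis
    using semilinear_liftD(3)[OF lift] unfolding semilinear_lift_def by blast
qed

end

text \<open>A Skolem--Noether statement: two unital embeddings of \<open>M\<^sub>m(E)\<close> into \<open>M\<^sub>m\<^sub>s(\<bbbF>\<^sub>p)\<close> are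
  conjugate, even after twisting one of them by an inner automorphism of \<open>M\<^sub>m(E)\<close>.\<close>

lemma exists_transport_iso:
  assumes A: "matrix_embedding E m s p \<iota>" and B: "matrix_embedding E m s p \<iota>'"
    and Q: "Q \<in> mats_over E m m" "Qi \<in> mats_over E m m" "Q * Qi = 1\<^sub>m m" "Qi * Q = 1\<^sub>m m"
  obtains U Ui where "embedding_transport E m s p \<iota> \<iota>' Q Qi U Ui"
proof -
  interpret A: matrix_embedding E m s p \<iota> by (rule A)
  interpret B: matrix_embedding E m s p \<iota>' by (rule B)
  interpret AB: embedding_pair E m s p \<iota> \<iota>' by (intro embedding_pair.intro A B)
  interpret BA: embedding_pair E m s p \<iota>' \<iota> by (intro embedding_pair.intro A B)
  obtain U where U: "U \<in> mats_over prime_subfield (m * s) (m * s)"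
    "\<forall>y\<in>A.Em. U *\<^sub>v A.psi y = B.psi (Q *\<^sub>v y)"
    using AB.exists_psi_transport[OF Q(1)] by blast
  obtain Ui where Ui: "Ui \<in> mats_over prime_subfield (m * s) (m * s)"
    "\<forall>y\<in>A.Em. Ui *\<^sub>v B.psi y = A.psi (Qi *\<^sub>v y)"
    using BA.exists_psi_transport[OF Q(2)] by blast
  have Uc: "U \<in> carrier_mat (m * s) (m * s)" "Ui \<in> carrier_mat (m * s) (m * s)"
    using U(1) Ui(1) mats_over_carrier by blast+
  have UiU: "Ui * U = 1\<^sub>m (m * s)"
    using AB.psi_transport_left_inverse[OF Q(1,2,4) Uc(1) U(2) Uc(2) Ui(2)] .
  have UUi: "U * Ui = 1\<^sub>m (m * s)"
    using BA.psi_transport_left_inverse[OF Q(2,1,3) Uc(2) Ui(2) Uc(1) U(2)] .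
  have "Ui * \<iota>' (Q * x * Qi) * U = \<iota> x" if x: "x \<in> A.ME" for x
  proof -
    have QxQi: "Q * x * Qi \<in> A.ME" using A.ME_mult Q x by blast
    have "Ui * \<iota>' (Q * x * Qi) * U = Ui * (\<iota>' (Q * x * Qi) * U)"
      using Uc B.iota_carrier[OF QxQi] by (simp add: assoc_mult_mat[of _ "m * s" "m * s" _ "m * s" _ "m * s"])
    also have "\<dots> = Ui * (U * \<iota> x)" using AB.psi_transport_intertwines[OF Q(1,2,4) U x] by simp
    also have "\<dots> = \<iota> x"
      using UiU Uc A.iota_carrier[OF x] by (simp add: assoc_mult_mat[symmetric, of _ "m * s" "m * s" _ "m * s" _ "m * s"])
    finally show ?thesis .
  qed
  with U(1) Ui(1) UUi UiU Q(1-3) show ?thesis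
    by (intro that[of U Ui] embedding_transport.intro embedding_transport_axioms.intro AB.embedding_pair_axioms) auto
qed

section \<open>Uniqueness of the factor set class\<close>

context matrix_embedding
begin

lemma iota_scalar_mult: "a \<in> E \<Longrightarrow> b \<in> E \<Longrightarrow> \<iota> (a \<cdot>\<^sub>m 1\<^sub>m m) * \<iota> (b \<cdot>\<^sub>m 1\<^sub>m m) = \<iota> ((a * b) \<cdot>\<^sub>m 1\<^sub>m m)"
  using iota_mult[OF ME_scalar ME_scalar, of a b] smult_prod_mat[of "1\<^sub>m m" m "1\<^sub>m m" a b] by simp

lemma iota_scalar_commute:
  assumes "a \<in> E" "x \<in> ME"
  shows "\<iota> (a \<cdot>\<^sub>m 1\<^sub>m m) * \<iota> x = \<iota> x * \<iota> (a \<cdot>\<^sub>m 1\<^sub>m m)"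
proof -
  have xc: "x \<in> carrier_mat m m" using ME_carrier[OF assms(2)] .
  have "(a \<cdot>\<^sub>m 1\<^sub>m m) * x = x * (a \<cdot>\<^sub>m 1\<^sub>m m)"
    using mult_smult_assoc_mat[of "1\<^sub>m m" m m x m a] mult_smult_distrib[of x m m "1\<^sub>m m" m a] xc by simp
  thus ?thesis using iota_mult[OF ME_scalar[OF assms(1)] assms(2)] iota_mult[OF assms(2) ME_scalar[OF assms(1)]]
    by simp
qed

lemma iota_scalar_inj: "a \<in> E \<Longrightarrow> b \<in> E \<Longrightarrow> \<iota> (a \<cdot>\<^sub>m 1\<^sub>m m) = \<iota> (b \<cdot>\<^sub>m 1\<^sub>m m) \<Longrightarrow> a = b"
proof -
  assume ab: "a \<in> E" "b \<in> E" "\<iota> (a \<cdot>\<^sub>m 1\<^sub>m m) = \<iota> (b \<cdot>\<^sub>m 1\<^sub>m m)"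
  hence "a \<cdot>\<^sub>m 1\<^sub>m m = b \<cdot>\<^sub>m 1\<^sub>m m" using iota_inj ME_scalar unfolding inj_on_def by blast
  hence "(a \<cdot>\<^sub>m 1\<^sub>m m) $$ (0, 0) = (b \<cdot>\<^sub>m 1\<^sub>m m :: 'f mat) $$ (0, 0)" by simp
  thus "a = b" using mpos by simp
qed

end

lemma semilinear_lift_normal_conj:
  assumes lift: "semilinear_lift G N E m s sig X \<iota> Y" and G: "group G" and N: "N \<subseteq> carrier G"
    and g: "g \<in> carrier G" and n: "n \<in> N" and n': "g \<otimes>\<^bsub>G\<^esub> n \<otimes>\<^bsub>G\<^esub> inv\<^bsub>G\<^esub> g \<in> N"
  shows "\<iota> (X (g \<otimes>\<^bsub>G\<^esub> n \<otimes>\<^bsub>G\<^esub> inv\<^bsub>G\<^esub> g)) * Y g = Y g * \<iota> (X n)"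
proof -
  interpret group G by (rule G)
  let ?n' = "g \<otimes>\<^bsub>G\<^esub> n \<otimes>\<^bsub>G\<^esub> inv\<^bsub>G\<^esub> g"
  have nG: "n \<in> carrier G" using n N by blast
  have gn: "g \<otimes>\<^bsub>G\<^esub> n = ?n' \<otimes>\<^bsub>G\<^esub> g"
    using g nG by (simp add: m_assoc)
  have "\<iota> (X ?n') * Y g = Y (?n' \<otimes>\<^bsub>G\<^esub> g)"
    using semilinear_liftD(5,7)[OF lift] g n' by simp
  also have "\<dots> = Y g * \<iota> (X n)"
    using semilinear_liftD(5,6)[OF lift] g n unfolding gn[symmetric] by simp
  finally show ?thesis .
qed

locale lift_comparison = matrix_embedding E m s p \<iota> + G: group G
  for E :: "'f::{field,finite} set" and m s p \<iota> and G :: "('g, 'b) monoid_scheme"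
    and N :: "'g set" and sig :: "'g \<Rightarrow> 'f \<Rightarrow> 'f" and X Y Y' :: "'g \<Rightarrow> 'f mat" +
  assumes N_subset: "N \<subseteq> carrier G"
    and N_conj: "\<forall>g\<in>carrier G. \<forall>n\<in>N. g \<otimes>\<^bsub>G\<^esub> n \<otimes>\<^bsub>G\<^esub> inv\<^bsub>G\<^esub> g \<in> N"
    and X_over: "\<forall>n\<in>N. X n \<in> ME"
    and absolutely_irreducible: "\<forall>M\<in>carrier_mat m m. (\<forall>n\<in>N. M * X n = X n * M) \<longrightarrow> (\<exists>c. M = c \<cdot>\<^sub>m 1\<^sub>m m)"
    and lift: "semilinear_lift G N E m s sig X \<iota> Y" and lift': "semilinear_lift G N E m s sig X \<iota> Y'"
begin

abbreviation "C \<equiv> carrier_mat (m * s) (m * s)"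

lemma Y_carrier: "g \<in> carrier G \<Longrightarrow> Y g \<in> C" and Y'_carrier: "g \<in> carrier G \<Longrightarrow> Y' g \<in> C"
  using semilinear_liftD(1)[OF lift] semilinear_liftD(1)[OF lift'] mats_over_carrier by blast+

lemma iota_scalar_carrier: "d \<in> E \<Longrightarrow> \<iota> (d \<cdot>\<^sub>m 1\<^sub>m m) \<in> C"
  using iota_carrier ME_scalar by blast

lemma assoc_C: "A \<in> C \<Longrightarrow> B \<in> C \<Longrightarrow> D \<in> C \<Longrightarrow> A * B * D = A * (B * D)"
  by (rule assoc_mult_mat)

lemma Y_cancel:
  assumes g: "g \<in> carrier G" and ab: "a \<in> E" "b \<in> E"
    and eq: "Y g * \<iota> (a \<cdot>\<^sub>m 1\<^sub>m m) = Y g * \<iota> (b \<cdot>\<^sub>m 1\<^sub>m m)"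
  shows "a = b"
proof -
  obtain Yi where Yi: "Yi \<in> C" "Y g * Yi = 1\<^sub>m (m * s)" "Yi * Y g = 1\<^sub>m (m * s)"
    using invertible_mat_obtain_inverse[OF Y_carrier[OF g] semilinear_liftD(2)[OF lift g]] by blast
  have inv: "\<iota> (d \<cdot>\<^sub>m 1\<^sub>m m) = Yi * (Y g * \<iota> (d \<cdot>\<^sub>m 1\<^sub>m m))" if "d \<in> E" for d
    using assoc_C[OF Yi(1) Y_carrier[OF g] iota_scalar_carrier[OF that]] Yi(3) iota_scalar_carrier[OF that]
    by simp
  have "\<iota> (a \<cdot>\<^sub>m 1\<^sub>m m) = Yi * (Y g * \<iota> (a \<cdot>\<^sub>m 1\<^sub>m m))" by (rule inv[OF ab(1)])
  also have "\<dots> = \<iota> (b \<cdot>\<^sub>m 1\<^sub>m m)" unfolding eq by (rule inv[OF ab(2), symmetric])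
  finally show ?thesis using iota_scalar_inj ab by blast
qed

lemma lift_ratio_in_commutant:
  assumes g: "g \<in> carrier G" and Yi: "Yi \<in> C" "Y g * Yi = 1\<^sub>m (m * s)" "Yi * Y g = 1\<^sub>m (m * s)"
  shows "\<forall>w\<in>V. (Yi * Y' g) *\<^sub>v w \<in> V"
    and "\<forall>c\<in>E. (Yi * Y' g) * \<iota> (c \<cdot>\<^sub>m 1\<^sub>m m) = \<iota> (c \<cdot>\<^sub>m 1\<^sub>m m) * (Yi * Y' g)"
    and "\<forall>n\<in>N. (Yi * Y' g) * \<iota> (X n) = \<iota> (X n) * (Yi * Y' g)"
proof -
  have Yg: "Y g \<in> C" "Y' g \<in> C" using Y_carrier Y'_carrier g by auto
  note comm = inverse_mult_commute[OF _ _ Yg Yi(1) Yi(2,3)]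
  show "\<forall>w\<in>V. (Yi * Y' g) *\<^sub>v w \<in> V"
  proof
    fix w assume w: "w \<in> V"
    have "(Yi * Y' g) *\<^sub>v w = Yi *\<^sub>v (Y' g *\<^sub>v w)" using Yi(1) Yg vecs_over_carrier[OF w] by simp
    moreover have "Y' g *\<^sub>v w \<in> V" using V_mult[OF semilinear_liftD(1)[OF lift' g] w] .
    ultimately show "(Yi * Y' g) *\<^sub>v w \<in> V"
      using inverse_maps_V[OF semilinear_liftD(1)[OF lift g] Yi(1) Yi(3)] by simp
  qed
  show "\<forall>c\<in>E. (Yi * Y' g) * \<iota> (c \<cdot>\<^sub>m 1\<^sub>m m) = \<iota> (c \<cdot>\<^sub>m 1\<^sub>m m) * (Yi * Y' g)"
  proof
    fix c assume c: "c \<in> E"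
    obtain d where d: "d \<in> E" "c = sig g d" using semilinear_liftD(3)[OF lift g] c by blast
    show "(Yi * Y' g) * \<iota> (c \<cdot>\<^sub>m 1\<^sub>m m) = \<iota> (c \<cdot>\<^sub>m 1\<^sub>m m) * (Yi * Y' g)"
      using comm[OF iota_scalar_carrier[OF d(1)] iota_scalar_carrier[OF c]]
        semilinear_liftD(4)[OF lift g d(1)] semilinear_liftD(4)[OF lift' g d(1)] unfolding d(2) by blast
  qed
  show "\<forall>n\<in>N. (Yi * Y' g) * \<iota> (X n) = \<iota> (X n) * (Yi * Y' g)"
  proof
    fix n assume n: "n \<in> N"
    let ?n' = "g \<otimes>\<^bsub>G\<^esub> n \<otimes>\<^bsub>G\<^esub> inv\<^bsub>G\<^esub> g"
    have n': "?n' \<in> N" using N_conj g n by blast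
    have X: "X ?n' \<in> ME" "X n \<in> ME" using X_over n n' by blast+
    show "(Yi * Y' g) * \<iota> (X n) = \<iota> (X n) * (Yi * Y' g)"
      using comm[OF iota_carrier[OF X(1)] iota_carrier[OF X(2)]]
        semilinear_lift_normal_conj[OF lift G.group_axioms N_subset g n n']
        semilinear_lift_normal_conj[OF lift' G.group_axioms N_subset g n n'] by blast
  qed
qed

text \<open>\<open>Y g\<^sup>-\<^sup>1 Y' g\<close> lies in the commutant of \<open>\<iota>(E)\<close> and \<open>\<iota>(X(N))\<close>,
  which by Schur consists of the \<open>\<iota>(c)\<close>, \<open>c \<in> E\<close>.\<close>

lemma lift_ratio_scalar:
  assumes g: "g \<in> carrier G"
  shows "\<exists>c\<in>E - {0}. Y' g = Y g * \<iota> (c \<cdot>\<^sub>m 1\<^sub>m m)"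
proof -
  have Yg: "Y g \<in> C" "Y' g \<in> C" using Y_carrier Y'_carrier g by auto
  obtain Yi where Yi: "Yi \<in> C" "Y g * Yi = 1\<^sub>m (m * s)" "Yi * Y g = 1\<^sub>m (m * s)"
    using invertible_mat_obtain_inverse[OF Yg(1) semilinear_liftD(2)[OF lift g]] by blast
  obtain c where c: "c \<in> E" "Yi * Y' g = \<iota> (c \<cdot>\<^sub>m 1\<^sub>m m)"
    using commutant_is_scalar[OF mult_carrier_mat[OF Yi(1) Yg(2)] lift_ratio_in_commutant(1,2)[OF g Yi]
        X_over lift_ratio_in_commutant(3)[OF g Yi] absolutely_irreducible] by blast
  have eq: "Y' g = Y g * \<iota> (c \<cdot>\<^sub>m 1\<^sub>m m)"
    using c(2) assoc_C[OF Yg(1) Yi(1) Yg(2)] Yi(2) Yg(2) by simp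
  have "c \<noteq> 0"
  proof
    assume "c = 0"
    moreover have "0 \<cdot>\<^sub>m 1\<^sub>m m = (0\<^sub>m m m :: 'f mat)" by (rule eq_matI) auto
    ultimately have "Y' g = 0\<^sub>m (m * s) (m * s)" using eq iota_zero Yg by simp
    moreover obtain B where "B \<in> C" "Y' g * B = 1\<^sub>m (m * s)"
      using invertible_mat_obtain_inverse[OF Yg(2) semilinear_liftD(2)[OF lift' g]] by blast
    ultimately show False using right_inverse_imp_nonzero ms_pos Yg(2) by blast
  qed
  thus ?thesis using c(1) eq by blast
qed

lemma lifts_differ_by_scalars:
  obtains \<gamma> where "\<And>g. g \<in> carrier G \<Longrightarrow> \<gamma> g \<in> E - {0}"
    "\<And>g. g \<in> carrier G \<Longrightarrow> Y' g = Y g * \<iota> (\<gamma> g \<cdot>\<^sub>m 1\<^sub>m m)"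
    "\<And>g n. g \<in> carrier G \<Longrightarrow> n \<in> N \<Longrightarrow> \<gamma> (g \<otimes>\<^bsub>G\<^esub> n) = \<gamma> g"
proof -
  have ex: "\<forall>g\<in>carrier G. \<exists>c. c \<in> E - {0} \<and> Y' g = Y g * \<iota> (c \<cdot>\<^sub>m 1\<^sub>m m)"
    using lift_ratio_scalar by blast
  obtain \<gamma> where \<gamma>: "\<forall>g\<in>carrier G. \<gamma> g \<in> E - {0} \<and> Y' g = Y g * \<iota> (\<gamma> g \<cdot>\<^sub>m 1\<^sub>m m)"
    using bchoice[OF ex] by blast
  have "\<gamma> (g \<otimes>\<^bsub>G\<^esub> n) = \<gamma> g" if g: "g \<in> carrier G" and n: "n \<in> N" for g n
  proof -
    have gn: "g \<otimes>\<^bsub>G\<^esub> n \<in> carrier G" using g n N_subset by blast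
    have gE: "\<gamma> g \<in> E" using \<gamma> g by blast
    have Xn: "X n \<in> ME" using X_over n by blast
    have Yn: "Y n = \<iota> (X n)" "Y' n = \<iota> (X n)" using semilinear_liftD(5)[OF lift n] semilinear_liftD(5)[OF lift' n] by blast+
    have Y'gn: "Y' (g \<otimes>\<^bsub>G\<^esub> n) = Y (g \<otimes>\<^bsub>G\<^esub> n) * \<iota> (\<gamma> (g \<otimes>\<^bsub>G\<^esub> n) \<cdot>\<^sub>m 1\<^sub>m m)"
      and Y'g: "Y' g = Y g * \<iota> (\<gamma> g \<cdot>\<^sub>m 1\<^sub>m m)" using \<gamma> g gn by blast+
    have "Y (g \<otimes>\<^bsub>G\<^esub> n) * \<iota> (\<gamma> (g \<otimes>\<^bsub>G\<^esub> n) \<cdot>\<^sub>m 1\<^sub>m m) = Y' g * Y' n"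
      using semilinear_liftD(6)[OF lift' g n] unfolding Y'gn .
    also have "\<dots> = Y g * (\<iota> (\<gamma> g \<cdot>\<^sub>m 1\<^sub>m m) * \<iota> (X n))"
      unfolding Y'g Yn(2) by (rule assoc_C[OF Y_carrier[OF g] iota_scalar_carrier[OF gE] iota_carrier[OF Xn]])
    also have "\<dots> = (Y g * \<iota> (X n)) * \<iota> (\<gamma> g \<cdot>\<^sub>m 1\<^sub>m m)"
      using iota_scalar_commute[OF gE Xn] assoc_C[OF Y_carrier[OF g] iota_carrier[OF Xn] iota_scalar_carrier[OF gE]]
      by simp
    also have "\<dots> = Y (g \<otimes>\<^bsub>G\<^esub> n) * \<iota> (\<gamma> g \<cdot>\<^sub>m 1\<^sub>m m)"
      using semilinear_liftD(6)[OF lift g n] Yn(1) by simp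
    finally show ?thesis using Y_cancel[OF gn] \<gamma> gn gE by blast
  qed
  with \<gamma> that show ?thesis by blast
qed

lemma factor_sets_differ_by_coboundary:
  assumes \<gamma>: "\<And>g. g \<in> carrier G \<Longrightarrow> \<gamma> g \<in> E - {0}"
      "\<And>g. g \<in> carrier G \<Longrightarrow> Y' g = Y g * \<iota> (\<gamma> g \<cdot>\<^sub>m 1\<^sub>m m)"
    and g: "g \<in> carrier G" and h: "h \<in> carrier G"
    and \<alpha>: "\<alpha> \<in> E" "Y g * Y h = Y (g \<otimes>\<^bsub>G\<^esub> h) * \<iota> (\<alpha> \<cdot>\<^sub>m 1\<^sub>m m)"
    and \<alpha>': "\<alpha>' \<in> E" "Y' g * Y' h = Y' (g \<otimes>\<^bsub>G\<^esub> h) * \<iota> (\<alpha>' \<cdot>\<^sub>m 1\<^sub>m m)"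
  shows "\<alpha>' = \<alpha> * sig h (\<gamma> g) * \<gamma> h * inverse (\<gamma> (g \<otimes>\<^bsub>G\<^esub> h))"
proof -
  have gh: "g \<otimes>\<^bsub>G\<^esub> h \<in> carrier G" using g h by simp
  have E: "\<gamma> g \<in> E" "\<gamma> h \<in> E" "\<gamma> (g \<otimes>\<^bsub>G\<^esub> h) \<in> E" "\<gamma> (g \<otimes>\<^bsub>G\<^esub> h) \<noteq> 0"
    using \<gamma>(1) g h gh by auto
  have sE: "sig h (\<gamma> g) \<in> E" using semilinear_liftD(3)[OF lift h] E(1) by blast
  have prodE: "\<alpha> * (sig h (\<gamma> g) * \<gamma> h) \<in> E" "\<gamma> (g \<otimes>\<^bsub>G\<^esub> h) * \<alpha>' \<in> E"
    using subfieldD(4)[OF sfE] \<alpha>(1) \<alpha>'(1) sE E by blast+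
  note Yc = Y_carrier[OF g] Y_carrier[OF h] Y_carrier[OF gh]
  note sc = iota_scalar_carrier[OF E(1)] iota_scalar_carrier[OF E(2)] iota_scalar_carrier[OF sE]
  have "Y' g * Y' h = Y g * ((\<iota> (\<gamma> g \<cdot>\<^sub>m 1\<^sub>m m) * Y h) * \<iota> (\<gamma> h \<cdot>\<^sub>m 1\<^sub>m m))"
    using \<gamma>(2) g h Yc sc by (simp add: assoc_C)
  also have "\<dots> = (Y g * Y h) * (\<iota> (sig h (\<gamma> g) \<cdot>\<^sub>m 1\<^sub>m m) * \<iota> (\<gamma> h \<cdot>\<^sub>m 1\<^sub>m m))"
    using semilinear_liftD(4)[OF lift h E(1)] Yc sc by (simp add: assoc_C)
  also have "\<dots> = Y (g \<otimes>\<^bsub>G\<^esub> h) * \<iota> ((\<alpha> * (sig h (\<gamma> g) * \<gamma> h)) \<cdot>\<^sub>m 1\<^sub>m m)"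
    using \<alpha> iota_scalar_mult sE E \<alpha>(1) subfieldD(4)[OF sfE] Yc iota_scalar_carrier by (simp add: assoc_C)
  finally have l: "Y' g * Y' h = Y (g \<otimes>\<^bsub>G\<^esub> h) * \<iota> ((\<alpha> * (sig h (\<gamma> g) * \<gamma> h)) \<cdot>\<^sub>m 1\<^sub>m m)" .
  have "Y' g * Y' h = Y (g \<otimes>\<^bsub>G\<^esub> h) * \<iota> ((\<gamma> (g \<otimes>\<^bsub>G\<^esub> h) * \<alpha>') \<cdot>\<^sub>m 1\<^sub>m m)"
    using \<alpha>' \<gamma>(2)[OF gh] iota_scalar_mult[OF E(3) \<alpha>'(1)] Yc iota_scalar_carrier E(3) \<alpha>'(1) by (simp add: assoc_C)
  hence "\<alpha> * (sig h (\<gamma> g) * \<gamma> h) = \<gamma> (g \<otimes>\<^bsub>G\<^esub> h) * \<alpha>'"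
    using Y_cancel[OF gh prodE] l by simp
  thus ?thesis using E(4) by (simp add: field_simps)
qed

lemma factor_sets_cohomologous:
  assumes \<alpha>: "\<forall>g\<in>carrier G. \<forall>h\<in>carrier G. \<alpha> g h \<in> E \<and> Y g * Y h = Y (g \<otimes>\<^bsub>G\<^esub> h) * \<iota> (\<alpha> g h \<cdot>\<^sub>m 1\<^sub>m m)"
    and \<alpha>': "\<forall>g\<in>carrier G. \<forall>h\<in>carrier G.
      \<alpha>' g h \<in> E \<and> Y' g * Y' h = Y' (g \<otimes>\<^bsub>G\<^esub> h) * \<iota> (\<alpha>' g h \<cdot>\<^sub>m 1\<^sub>m m)"
  shows "\<exists>\<gamma>. (\<forall>g\<in>carrier G. \<gamma> g \<in> E - {0} \<and> (\<forall>n\<in>N. \<gamma> (g \<otimes>\<^bsub>G\<^esub> n) = \<gamma> g)) \<and>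
           (\<forall>g\<in>carrier G. \<forall>h\<in>carrier G.
              \<alpha>' g h = \<alpha> g h * sig h (\<gamma> g) * \<gamma> h * inverse (\<gamma> (g \<otimes>\<^bsub>G\<^esub> h)))"
proof -
  obtain \<gamma> where \<gamma>: "\<And>g. g \<in> carrier G \<Longrightarrow> \<gamma> g \<in> E - {0}"
      "\<And>g. g \<in> carrier G \<Longrightarrow> Y' g = Y g * \<iota> (\<gamma> g \<cdot>\<^sub>m 1\<^sub>m m)"
      "\<And>g n. g \<in> carrier G \<Longrightarrow> n \<in> N \<Longrightarrow> \<gamma> (g \<otimes>\<^bsub>G\<^esub> n) = \<gamma> g"
    using lifts_differ_by_scalars by blast
  have "\<alpha>' g h = \<alpha> g h * sig h (\<gamma> g) * \<gamma> h * inverse (\<gamma> (g \<otimes>\<^bsub>G\<^esub> h))"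
    if gh: "g \<in> carrier G" "h \<in> carrier G" for g h
  proof -
    have "\<alpha> g h \<in> E" "Y g * Y h = Y (g \<otimes>\<^bsub>G\<^esub> h) * \<iota> (\<alpha> g h \<cdot>\<^sub>m 1\<^sub>m m)"
      "\<alpha>' g h \<in> E" "Y' g * Y' h = Y' (g \<otimes>\<^bsub>G\<^esub> h) * \<iota> (\<alpha>' g h \<cdot>\<^sub>m 1\<^sub>m m)"
      using \<alpha> \<alpha>' gh by blast+
    from factor_sets_differ_by_coboundary[OF _ _ gh this] \<gamma>(1,2) show ?thesis by blast
  qed
  with \<gamma> show ?thesis by blast
qed

end

lemma unital_embedding_matrix_embedding:
  fixes E :: "'f::{field,finite} set"
  assumes "subfield E" "unital_embedding E m s \<iota>" "0 < m" "card E = p ^ s"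
    and "prime p" "of_nat p = (0 :: 'f)"
  shows "matrix_embedding E m s p \<iota>"
  using assms card_prime_subfield[OF assms(5,6)] by (intro matrix_embedding.intro)

theorem mainTheorem10:
  fixes G :: "('g, 'b) monoid_scheme" and N :: "'g set" and p m s :: nat
    and E :: "'f::{field, finite} set"
    and X X' :: "'g \<Rightarrow> 'f mat" and \<iota> \<iota>' :: "'f mat \<Rightarrow> 'f mat" and Y Y' :: "'g \<Rightarrow> 'f mat"
    and sig :: "'g \<Rightarrow> 'f \<Rightarrow> 'f" and \<alpha> \<alpha>' :: "'g \<Rightarrow> 'g \<Rightarrow> 'f"
  assumes "group G" and "finite (carrier G)" and "N \<lhd> G"
    and "prime p" and "of_nat p = (0 :: 'f)"
    and "splitting_field TYPE('f) G"
    and "irreducible_rep (G\<lparr>carrier := N\<rparr>) m X"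
    and "E = generated_subfield ((\<lambda>n. mat_trace (X n)) ` N)"
    and "card E = p ^ s"
    and "\<forall>n\<in>N. X n \<in> mats_over E m m"
    and "\<forall>g\<in>carrier G. field_aut E (sig g) \<and>
           rep_equiv (G\<lparr>carrier := N\<rparr>) m X (\<lambda>n. map_mat (sig g) (X (g \<otimes>\<^bsub>G\<^esub> n \<otimes>\<^bsub>G\<^esub> inv\<^bsub>G\<^esub> g)))"
    and "rep_equiv (G\<lparr>carrier := N\<rparr>) m X X'"
    and "\<forall>n\<in>N. X' n \<in> mats_over E m m"
    and "unital_embedding E m s \<iota>" and "unital_embedding E m s \<iota>'"
    and "Y_function G N E m s sig X \<iota> Y" and "Y_function G N E m s sig X' \<iota>' Y'"
    and "\<forall>g\<in>carrier G. \<forall>h\<in>carrier G. \<alpha> g h \<in> E - {0} \<and>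
           Y g * Y h = Y (g \<otimes>\<^bsub>G\<^esub> h) * \<iota> (\<alpha> g h \<cdot>\<^sub>m 1\<^sub>m m)"
    and "\<forall>g\<in>carrier G. \<forall>h\<in>carrier G. \<alpha>' g h \<in> E - {0} \<and>
           Y' g * Y' h = Y' (g \<otimes>\<^bsub>G\<^esub> h) * \<iota>' (\<alpha>' g h \<cdot>\<^sub>m 1\<^sub>m m)"
  shows "\<exists>\<gamma>. (\<forall>g\<in>carrier G. \<gamma> g \<in> E - {0} \<and> (\<forall>n\<in>N. \<gamma> (g \<otimes>\<^bsub>G\<^esub> n) = \<gamma> g)) \<and>
           (\<forall>g\<in>carrier G. \<forall>h\<in>carrier G.
              \<alpha>' g h = \<alpha> g h * sig h (\<gamma> g) * \<gamma> h * inverse (\<gamma> (g \<otimes>\<^bsub>G\<^esub> h)))"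
proof -
  have sfE: "subfield E" using assms(8) subfield_generated_subfield by simp
  have mpos: "0 < m" using assms(7) unfolding irreducible_rep_def by simp
  have emb: "matrix_embedding E m s p \<iota>" "matrix_embedding E m s p \<iota>'"
    using unital_embedding_matrix_embedding[OF sfE assms(14) mpos assms(9,4,5)]
      unital_embedding_matrix_embedding[OF sfE assms(15) mpos assms(9,4,5)] .
  have N: "subgroup N G" using normal_imp_subgroup[OF assms(3)] .
  have split: "\<forall>M\<in>carrier_mat m m. (\<forall>n\<in>N. M * X n = X n * M) \<longrightarrow> (\<exists>c. M = c \<cdot>\<^sub>m 1\<^sub>m m)"
    using assms(6) N assms(7) unfolding splitting_field_def by blast
  obtain Q Qi where Q: "Q \<in> mats_over E m m" "Qi \<in> mats_over E m m" "Q * Qi = 1\<^sub>m m" "Qi * Q = 1\<^sub>m m"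
      "\<forall>n\<in>N. Q * X n * Qi = X' n"
    using rep_equiv_over_subfield[OF sfE assms(4,5,9) mpos assms(10,13,12) split] by blast
  obtain U Ui where "embedding_transport E m s p \<iota> \<iota>' Q Qi U Ui"
    using exists_transport_iso[OF emb Q(1-4)] by blast
  then interpret T: embedding_transport E m s p \<iota> \<iota>' Q Qi U Ui .
  have sig: "\<forall>g\<in>carrier G. field_aut E (sig g)" using assms(11) by blast
  note lifts = Y_function_semilinear_lift[OF emb(1) assms(16) sig] Y_function_semilinear_lift[OF emb(2) assms(17) sig]
  interpret lift_comparison E m s p \<iota> G N sig X Y "\<lambda>g. Ui * Y' g * U"
    using emb(1) assms(1,10) N normal.inv_op_closed2[OF assms(3)] split lifts(1)
      T.semilinear_lift_conjugate[OF lifts(2) assms(10) subgroup.subset[OF N] Q(5)]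
    by (intro lift_comparison.intro lift_comparison_axioms.intro) (auto simp: subgroup.subset)
  have Y'c: "\<And>x. x \<in> carrier G \<Longrightarrow> Y' x \<in> carrier_mat (m * s) (m * s)"
    using semilinear_liftD(1)[OF lifts(2)] mats_over_carrier by blast
  have "\<forall>g\<in>carrier G. \<forall>h\<in>carrier G. \<alpha>' g h \<in> E \<and>
      (Ui * Y' g * U) * (Ui * Y' h * U) = (Ui * Y' (g \<otimes>\<^bsub>G\<^esub> h) * U) * \<iota> (\<alpha>' g h \<cdot>\<^sub>m 1\<^sub>m m)"
    using T.conjugate_factor_set[OF Y'c Y'c Y'c] assms(19) by simp
  with assms(18) show ?thesis by (intro factor_sets_cohomologous) auto
qed

end
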